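(* Let $s>3/2$. For every $\delta>0$ there exists $C_\delta>0$ such that for all $\alpha,M\in\mathbb{R}$ and all $u_1,u_2,u_3\in H^s(\mathbb{R}^2)$, $\|T^{\alpha,M}(u_1,u_2,u_3)\|_{H^s}\le C_\delta\langle\alpha\rangle^{\delta}\langle M\rangle^{1/2+\delta}\prod_{j=1}^3\|u_j\|_{H^s}$.
   Context: (Setting of the modified Zakharov–Kuznetsov equation in symmetrized coordinates $u_t+u_{xxx}+u_{yyy}=(\partial_x+\partial_y)(u^3)$.) $\langle a\rangle=(1+|a|^2)^{1/2}$. Frequencies $\xi=(x,y)$, $\xi_j=(x_j,y_j)\in\mathbb{R}^2$, $\tilde x_j=x-x_j$, $\tilde y_j=y-y_j$; $\Xi=(\xi,\xi_1,\xi_2,\xi_3)$, $\Phi(\Xi)=\tilde x_1\tilde x_2\tilde x_3+\tilde y_1\tilde y_2\tilde y_3$, $m(\Xi)=x+y$ (the symbol of $\partial_x+\partial_y$ up to a factor $i$), and $\mathcal{F}[T^{\alpha,M}(u_1,u_2,u_3)](\xi)=\int_{\xi_1+\xi_2+\xi_3=\xi,\ |\Phi(\Xi)-\alpha|<M}m(\Xi)\hat u_1(\xi_1)\hat u_2(\xi_2)\hat u_3(\xi_3)\,d\xi_1d\xi_2$. *)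

theory Defs
  imports "HOL-Analysis.Analysis"
begin

text \<open>An element u of H^s(R^2)
  is represented by its Fourier transform f = u-hat; the H^s norm is
  (integral of jb(xi)^(2s) |f(xi)|^2)^(1/2).\<close>

definition jb :: "real \<Rightarrow> real" where
  "jb a = sqrt (1 + a\<^sup>2)"

definition jb2 :: "real \<times> real \<Rightarrow> real" where
  "jb2 \<xi> = sqrt (1 + (norm \<xi>)\<^sup>2)"

definition Phi :: "real \<times> real \<Rightarrow> real \<times> real \<Rightarrow> real \<times> real \<Rightarrow> real \<times> real \<Rightarrow> real" where
  "Phi \<xi> \<xi>1 \<xi>2 \<xi>3 =
     (fst \<xi> - fst \<xi>1) * (fst \<xi> - fst \<xi>2) * (fst \<xi> - fst \<xi>3)
   + (snd \<xi> - snd \<xi>1) * (snd \<xi> - snd \<xi>2) * (snd \<xi> - snd \<xi>3)"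

definition msym :: "real \<times> real \<Rightarrow> real" where
  "msym \<xi> = fst \<xi> + snd \<xi>"

text \<open>Fourier transform of T^{alpha,M}(u1,u2,u3) at xi, written in terms of
  f_j = u_j-hat; integration over (xi1,xi2) with xi3 = xi - xi1 - xi2.\<close>
definition T_hat ::
  "real \<Rightarrow> real \<Rightarrow> (real \<times> real \<Rightarrow> complex) \<Rightarrow> (real \<times> real \<Rightarrow> complex)
     \<Rightarrow> (real \<times> real \<Rightarrow> complex) \<Rightarrow> real \<times> real \<Rightarrow> complex" where
  "T_hat \<alpha> M f1 f2 f3 \<xi> =
     (\<integral>p. (indicator {p. \<bar>Phi \<xi> (fst p) (snd p) (\<xi> - fst p - snd p) - \<alpha>\<bar> < M} p :: complex)
           * complex_of_real (msym \<xi>) * f1 (fst p) * f2 (snd p) * f3 (\<xi> - fst p - snd p)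
       \<partial>(lborel :: ((real \<times> real) \<times> (real \<times> real)) measure))"

definition Hs_sq :: "real \<Rightarrow> (real \<times> real \<Rightarrow> complex) \<Rightarrow> ennreal" where
  "Hs_sq s f = (\<integral>\<^sup>+ \<xi>. ennreal (jb2 \<xi> powr (2 * s) * (cmod (f \<xi>))\<^sup>2) \<partial>lborel)"

definition Hs_hat :: "real \<Rightarrow> (real \<times> real \<Rightarrow> complex) set" where
  "Hs_hat s = {f. f \<in> borel_measurable lborel \<and> Hs_sq s f < \<infinity>}"

definition Hs_norm :: "real \<Rightarrow> (real \<times> real \<Rightarrow> complex) \<Rightarrow> real" where
  "Hs_norm s f = sqrt (enn2real (Hs_sq s f))"

end

theory Submission
  imports Defs
begin

text \<open>
  Write \<open>w(\<xi>) = \<langle>\<xi>\<rangle>\<^bsup>-2s\<^esup>\<close>. By Cauchy-Schwarz in \<open>(\<xi>\<^sub>1, \<xi>\<^sub>2)\<close>,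
  \<open>\<langle>\<xi>\<rangle>\<^bsup>2s\<^esup> \<bar>T(\<xi>)\<bar>\<^sup>2\<close> is at most \<open>J(\<xi>) Q(\<xi>)\<close>, where \<open>Q(\<xi>)\<close> is the convolution of the three
  \<open>H\<^sup>s\<close> densities \<open>\<langle>\<xi>\<^sub>j\<rangle>\<^bsup>2s\<^esup>\<bar>f\<^sub>j(\<xi>\<^sub>j)\<bar>\<^sup>2\<close>, which integrates to \<open>\<Prod>\<^sub>j \<parallel>f\<^sub>j\<parallel>\<^sup>2\<close>, and
  \<open>J(\<xi>) = \<langle>\<xi>\<rangle>\<^bsup>2s\<^esup> m(\<xi>)\<^sup>2 \<integral>\<^bsub>|\<Phi> - \<alpha>| < M\<^esub> w(\<xi>\<^sub>1) w(\<xi>\<^sub>2) w(\<xi>\<^sub>3)\<close>.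
  So it suffices to show \<open>J(\<xi>) \<le> C max 1 M\<close> uniformly in \<open>\<xi>\<close> and \<open>\<alpha>\<close>; this is even better than
  the claimed bound, which allows losses in \<open>\<alpha>\<close> and \<open>M\<close>.

  By symmetry one may assume that \<open>\<xi>\<^sub>3\<close> is the largest frequency; then \<open>\<langle>\<xi>\<rangle> \<le> 3\<langle>\<xi>\<^sub>3\<rangle>\<close> and
  \<open>J(\<xi>) \<lesssim> \<langle>\<xi>\<rangle>\<^sup>2 K(\<xi>)\<close> with \<open>K(\<xi>) = \<integral>\<^bsub>|\<Phi> - \<alpha>| < M\<^esub> w(\<xi>\<^sub>1) w(\<xi>\<^sub>2)\<close>. For \<open>N = |\<xi>| \<ge> 1\<close>
  swap coordinates so that \<open>|x| \<ge> N/\<surd>2\<close>. With \<open>\<xi>\<^sub>2\<close> and \<open>y\<^sub>1\<close> fixed, the phase is the quadratic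
  polynomial \<open>(x - x\<^sub>1)(x - x\<^sub>2)(x\<^sub>1 + x\<^sub>2) + const\<close> in \<open>x\<^sub>1\<close>. If \<open>\<xi>\<^sub>1, \<xi>\<^sub>2\<close> are both
  below \<open>N/8\<close>, its derivative is of size \<open>N\<^sup>2\<close> and the sublevel set has length \<open>\<lesssim> M/N\<^sup>2\<close>;
  if only \<open>\<xi>\<^sub>2\<close> is small, its leading coefficient \<open>x - x\<^sub>2\<close> is of size \<open>N\<close> and the sublevel
  set has length \<open>\<lesssim> (M/N)\<^bsup>1/2\<^esup>\<close>, while \<open>w(\<xi>\<^sub>1) \<le> N\<^bsup>-s-1/4\<^esup>\<langle>y\<^sub>1\<rangle>\<^bsup>-s+1/4\<^esup>\<close> keeps the rest
  integrable. If both are large, the decay of the weights alone gives \<open>N\<^bsup>1-2s\<^esup>\<close>. In each case the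
  gain beats \<open>\<langle>\<xi>\<rangle>\<^sup>2\<close> because \<open>s > 3/2\<close>.
\<close>

section \<open>Japanese brackets\<close>

lemma jb_pos: "0 < jb t"
  by (simp add: jb_def add_pos_nonneg)

lemma jb_ge_1: "1 \<le> jb t"
  by (simp add: jb_def)

lemma abs_le_jb: "\<bar>t\<bar> \<le> jb t"
  by (simp add: jb_def real_le_rsqrt)

lemma jb2_pos: "0 < jb2 v"
  by (simp add: jb2_def add_pos_nonneg)

lemma norm_le_jb2: "norm v \<le> jb2 v"
  by (simp add: jb2_def real_le_rsqrt)

lemma jb_fst_le_jb2: "jb (fst v) \<le> jb2 v"
  by (cases v) (simp add: jb2_def jb_def norm_Pair)

lemma jb_snd_le_jb2: "jb (snd v) \<le> jb2 v"
  by (cases v) (simp add: jb2_def jb_def norm_Pair)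

lemma jb2_add3_le:
  assumes "norm a \<le> norm c" "norm b \<le> norm c"
  shows "jb2 (a + b + c) \<le> 3 * jb2 c"
proof -
  have "norm (a + b + c) \<le> norm a + norm b + norm c"
    by (meson norm_triangle_le order_refl add_mono)
  with assms have "norm (a + b + c) \<le> 3 * norm c"
    by linarith
  then have "(norm (a + b + c))\<^sup>2 \<le> (3 * norm c)\<^sup>2"
    by (rule power_mono) simp
  then have "1 + (norm (a + b + c))\<^sup>2 \<le> 3\<^sup>2 * (1 + (norm c)\<^sup>2)"
    by (simp add: power_mult_distrib)
  then have "jb2 (a + b + c) \<le> sqrt (3\<^sup>2) * jb2 c"
    unfolding jb2_def by (metis real_sqrt_le_mono real_sqrt_mult)
  then show ?thesis
    by simp
qed

lemma msym_power2_le: "(msym \<xi>)\<^sup>2 \<le> 2 * (jb2 \<xi>)\<^sup>2"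
proof -
  have "(fst \<xi> + snd \<xi>)\<^sup>2 + (fst \<xi> - snd \<xi>)\<^sup>2 = 2 * ((fst \<xi>)\<^sup>2 + (snd \<xi>)\<^sup>2)"
    by (simp add: power2_eq_square algebra_simps)
  then have "(fst \<xi> + snd \<xi>)\<^sup>2 \<le> 2 * ((fst \<xi>)\<^sup>2 + (snd \<xi>)\<^sup>2)"
    using zero_le_power2[of "fst \<xi> - snd \<xi>"] by linarith
  then show ?thesis
    by (cases \<xi>) (simp add: msym_def jb2_def norm_Pair)
qed

lemma jb_borel [measurable]: "jb \<in> borel_measurable borel"
  unfolding jb_def by (intro borel_measurable_continuous_onI continuous_intros)

lemma jb2_borel [measurable]: "jb2 \<in> borel_measurable borel"
  unfolding jb2_def by (intro borel_measurable_continuous_onI continuous_intros)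

lemma jb2_powr_neg_le_jb_fst: "0 \<le> q \<Longrightarrow> jb2 v powr (- q) \<le> jb (fst v) powr (- q)"
  using jb_pos[of "fst v"] jb_fst_le_jb2[of v] by (intro powr_mono2') auto

lemma jb2_powr_neg_le_jb_snd: "0 \<le> q \<Longrightarrow> jb2 v powr (- q) \<le> jb (snd v) powr (- q)"
  using jb_pos[of "snd v"] jb_snd_le_jb2[of v] by (intro powr_mono2') auto

lemma jb2_powr_neg_add_le:
  assumes "0 < R" "R \<le> norm v" "0 \<le> a"
  shows "jb2 v powr (- (a + b)) \<le> R powr (- a) * jb2 v powr (- b)"
proof -
  have "jb2 v powr (- a) \<le> R powr (- a)"
    using assms norm_le_jb2[of v] by (intro powr_mono2') auto
  then have "jb2 v powr (- a) * jb2 v powr (- b) \<le> R powr (- a) * jb2 v powr (- b)"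
    by (rule mult_right_mono) simp
  then show ?thesis
    by (simp add: powr_add[symmetric])
qed

lemma norm_swap: "norm (prod.swap v) = norm v"
  by (cases v) (simp add: norm_Pair add.commute)

lemma jb2_swap: "jb2 (prod.swap v) = jb2 v"
  by (simp add: jb2_def norm_swap)

lemma jb2_power2: "(jb2 v)\<^sup>2 = 1 + (norm v)\<^sup>2"
  by (simp add: jb2_def)

lemma jb2_powr_power2: "(jb2 v powr q)\<^sup>2 = jb2 v powr (2 * q)"
  by (simp add: power2_eq_square powr_add[symmetric])

lemma max_1_le_jb_powr:
  assumes "0 \<le> \<delta>"
  shows "max 1 M \<le> (jb \<alpha> powr \<delta> * jb M powr (1/2 + \<delta>))\<^sup>2"
proof -
  have "1 \<le> (jb \<alpha> powr \<delta>)\<^sup>2"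
    using assms jb_ge_1[of \<alpha>] by (simp add: ge_one_powr_ge_zero)
  moreover have "max 1 M \<le> (jb M powr (1/2 + \<delta>))\<^sup>2"
  proof -
    have "max 1 M \<le> jb M powr 1"
      using jb_ge_1[of M] abs_le_jb[of M] jb_pos[of M] by auto
    also have "\<dots> \<le> jb M powr (2 * (1/2 + \<delta>))"
      using assms jb_ge_1[of M] by (intro powr_mono) auto
    also have "\<dots> = (jb M powr (1/2 + \<delta>))\<^sup>2"
      using jb_pos[of M] by (simp add: powr_power)
    finally show ?thesis .
  qed
  ultimately show ?thesis
    using mult_mono[of 1 "(jb \<alpha> powr \<delta>)\<^sup>2" "max 1 M" "(jb M powr (1/2 + \<delta>))\<^sup>2"]
    by (simp add: power_mult_distrib)
qed

section \<open>Nonnegative integrals over products of Euclidean spaces\<close>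

lemma fst_borel [measurable]:
  "fst \<in> borel_measurable (borel :: ('a::euclidean_space \<times> 'b::euclidean_space) measure)"
  by (intro borel_measurable_continuous_onI continuous_intros)

lemma snd_borel [measurable]:
  "snd \<in> borel_measurable (borel :: ('a::euclidean_space \<times> 'b::euclidean_space) measure)"
  by (intro borel_measurable_continuous_onI continuous_intros)

lemma nn_integral_lborel_fst:
  fixes f :: "'a::euclidean_space \<times> 'b::euclidean_space \<Rightarrow> ennreal"
  assumes "f \<in> borel_measurable borel"
  shows "(\<integral>\<^sup>+ v. f v \<partial>lborel) = (\<integral>\<^sup>+ x. \<integral>\<^sup>+ y. f (x, y) \<partial>lborel \<partial>lborel)"
  using lborel.nn_integral_fst[of f lborel] assms by (simp add: lborel_prod)

lemma nn_integral_lborel_snd: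
  fixes f :: "'a::euclidean_space \<times> 'b::euclidean_space \<Rightarrow> ennreal"
  assumes "f \<in> borel_measurable borel"
  shows "(\<integral>\<^sup>+ v. f v \<partial>lborel) = (\<integral>\<^sup>+ y. \<integral>\<^sup>+ x. f (x, y) \<partial>lborel \<partial>lborel)"
  using lborel_pair.nn_integral_snd[of f] assms by (simp add: lborel_prod)

lemma nn_integral_lborel_swap:
  fixes f :: "'a::euclidean_space \<times> 'a \<Rightarrow> ennreal"
  assumes [measurable]: "f \<in> borel_measurable borel"
  shows "(\<integral>\<^sup>+ v. f (prod.swap v) \<partial>lborel) = (\<integral>\<^sup>+ v. f v \<partial>lborel)"
proof -
  have [measurable]: "prod.swap \<in> borel_measurable (borel :: ('a \<times> 'a) measure)"
    by (intro borel_measurable_continuous_onI continuous_intros)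
  have "(\<integral>\<^sup>+ v. f (prod.swap v) \<partial>lborel) = (\<integral>\<^sup>+ x. \<integral>\<^sup>+ y. f (y, x) \<partial>lborel \<partial>lborel)"
    by (subst nn_integral_lborel_fst) simp_all
  also have "\<dots> = (\<integral>\<^sup>+ v. f v \<partial>lborel)"
    by (subst nn_integral_lborel_snd) simp_all
  finally show ?thesis .
qed

lemma nn_integral_lborel_tensor:
  fixes f g :: "'a::euclidean_space \<Rightarrow> ennreal"
  assumes [measurable]: "f \<in> borel_measurable borel" "g \<in> borel_measurable borel"
  shows "(\<integral>\<^sup>+ v. f (fst v) * g (snd v) \<partial>(lborel :: ('a \<times> 'a) measure))
    = (\<integral>\<^sup>+ x. f x \<partial>lborel) * (\<integral>\<^sup>+ y. g y \<partial>lborel)"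
  by (subst nn_integral_lborel_fst) (simp_all add: nn_integral_cmult nn_integral_multc)

lemma nn_integral_lborel_translate:
  fixes g :: "'a::euclidean_space \<Rightarrow> ennreal"
  assumes [measurable]: "g \<in> borel_measurable borel"
  shows "(\<integral>\<^sup>+ x. g (x - c) \<partial>lborel) = (\<integral>\<^sup>+ x. g x \<partial>lborel)"
proof -
  have "(\<integral>\<^sup>+ x. g x \<partial>lborel) = (\<integral>\<^sup>+ x. g x \<partial>distr lborel borel ((+) (- c)))"
    by (simp add: lborel_distr_plus)
  then show ?thesis
    by (subst (asm) nn_integral_distr) auto
qed

lemma nn_integral_lborel_reflect:
  fixes g :: "'a::euclidean_space \<Rightarrow> ennreal"
  assumes [measurable]: "g \<in> borel_measurable borel"
  shows "(\<integral>\<^sup>+ x. g (c - x) \<partial>lborel) = (\<integral>\<^sup>+ x. g x \<partial>lborel)"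
proof -
  have "(\<integral>\<^sup>+ x. g x \<partial>lborel) = (\<integral>\<^sup>+ x. g x \<partial>distr lborel borel (\<lambda>x. c + (-1) *\<^sub>R x))"
    using lborel_affine[of "-1" c] by (simp add: density_1)
  then show ?thesis
    by (subst (asm) nn_integral_distr) auto
qed

lemma nn_integral_lborel_map_prod_swap:
  fixes f :: "('a::euclidean_space \<times> 'a) \<times> ('b::euclidean_space \<times> 'b) \<Rightarrow> ennreal"
  assumes [measurable]: "f \<in> borel_measurable borel"
  shows "(\<integral>\<^sup>+ p. f (prod.swap (fst p), prod.swap (snd p)) \<partial>lborel) = (\<integral>\<^sup>+ p. f p \<partial>lborel)"
proof -
  have [measurable]: "prod.swap \<in> borel_measurable (borel :: ('c::euclidean_space \<times> 'c) measure)"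
    by (intro borel_measurable_continuous_onI continuous_intros)
  have "(\<integral>\<^sup>+ p. f (prod.swap (fst p), prod.swap (snd p)) \<partial>lborel)
      = (\<integral>\<^sup>+ a. \<integral>\<^sup>+ b. f (prod.swap a, prod.swap b) \<partial>lborel \<partial>lborel)"
    by (subst nn_integral_lborel_fst) simp_all
  also have "\<dots> = (\<integral>\<^sup>+ a. \<integral>\<^sup>+ b. f (prod.swap a, b) \<partial>lborel \<partial>lborel)"
    by (intro nn_integral_cong nn_integral_lborel_swap[where f = "\<lambda>b. f (_, b)"]) measurable
  also have "\<dots> = (\<integral>\<^sup>+ b. \<integral>\<^sup>+ a. f (prod.swap a, b) \<partial>lborel \<partial>lborel)"
  proof -
    have [measurable]: "(\<lambda>p. f (prod.swap (fst p), snd p)) \<in> borel_measurable borel"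
      by measurable
    from nn_integral_lborel_fst[OF this] nn_integral_lborel_snd[OF this] show ?thesis
      by simp
  qed
  also have "\<dots> = (\<integral>\<^sup>+ b. \<integral>\<^sup>+ a. f (a, b) \<partial>lborel \<partial>lborel)"
    by (intro nn_integral_cong nn_integral_lborel_swap[where f = "\<lambda>a. f (a, _)"]) measurable
  also have "\<dots> = (\<integral>\<^sup>+ p. f p \<partial>lborel)"
    by (rule nn_integral_lborel_snd[symmetric]) simp
  finally show ?thesis .
qed

lemma nn_integral_fiberwise_le:
  fixes F :: "('a::euclidean_space \<times> 'b::euclidean_space) \<times> 'c::euclidean_space \<Rightarrow> ennreal"
  assumes [measurable]: "F \<in> borel_measurable borel" "a \<in> borel_measurable borel" "b \<in> borel_measurable borel"
    and fiber: "\<And>y \<eta>. (\<integral>\<^sup>+ x. F ((x, y), \<eta>) \<partial>lborel) \<le> c * a y * b \<eta>"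
  shows "(\<integral>\<^sup>+ p. F p \<partial>lborel) \<le> c * (\<integral>\<^sup>+ y. a y \<partial>lborel) * (\<integral>\<^sup>+ \<eta>. b \<eta> \<partial>lborel)"
proof -
  have "(\<integral>\<^sup>+ p. F p \<partial>lborel) = (\<integral>\<^sup>+ \<eta>. \<integral>\<^sup>+ y. \<integral>\<^sup>+ x. F ((x, y), \<eta>) \<partial>lborel \<partial>lborel \<partial>lborel)"
    by (subst nn_integral_lborel_snd, simp, subst nn_integral_lborel_snd) simp_all
  also have "\<dots> \<le> (\<integral>\<^sup>+ \<eta>. \<integral>\<^sup>+ y. c * a y * b \<eta> \<partial>lborel \<partial>lborel)"
    by (intro nn_integral_mono fiber)
  also have "\<dots> = c * (\<integral>\<^sup>+ y. a y \<partial>lborel) * (\<integral>\<^sup>+ \<eta>. b \<eta> \<partial>lborel)"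
    by (simp add: nn_integral_cmult nn_integral_multc mult.assoc)
  finally show ?thesis .
qed

definition jb_powr_integral :: "real \<Rightarrow> ennreal" where
  "jb_powr_integral p = (\<integral>\<^sup>+ t. ennreal (jb t powr (- p)) \<partial>lborel)"

definition jb2_powr_integral :: "real \<Rightarrow> ennreal" where
  "jb2_powr_integral p = (\<integral>\<^sup>+ v. ennreal (jb2 v powr (- p)) \<partial>lborel)"

lemma jb_powr_integral_finite:
  assumes "1 < p"
  shows "jb_powr_integral p < \<infinity>"
proof -
  define h0 where "h0 t = ennreal (indicator {-1..1} t)" for t :: real
  define h1 where "h1 t = ennreal (indicator {1..} t * t powr (- p))" for t :: real
  define h2 where "h2 t = h1 (- t)" for t
  have [measurable]: "h0 \<in> borel_measurable borel" "h1 \<in> borel_measurable borel" "h2 \<in> borel_measurable borel"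
    unfolding h0_def h1_def h2_def by measurable
  have "((\<lambda>t. t powr (- p)) has_integral 1 / (p - 1)) {1..}"
    using has_integral_powr_to_inf[of "- p" 1] assms by (simp add: minus_divide_right)
  from nn_integral_has_integral_lebesgue[OF _ this]
  have h1: "(\<integral>\<^sup>+ t. h1 t \<partial>lborel) = ennreal (1 / (p - 1))"
    by (simp add: h1_def ennreal_indicator)
  have h2: "(\<integral>\<^sup>+ t. h2 t \<partial>lborel) = (\<integral>\<^sup>+ t. h1 t \<partial>lborel)"
    using nn_integral_lborel_reflect[of h1 0] by (simp add: h2_def)
  have h0: "(\<integral>\<^sup>+ t. h0 t \<partial>lborel) < \<infinity>"
    by (simp add: h0_def ennreal_indicator)
  have pointwise: "ennreal (jb t powr (- p)) \<le> h0 t + h1 t + h2 t" for t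
  proof (cases "\<bar>t\<bar> \<le> 1")
    case True
    have "jb t powr (- p) \<le> 1"
      using assms jb_ge_1[of t] by (simp add: powr_minus inverse_le_1_iff ge_one_powr_ge_zero)
    with True have "ennreal (jb t powr (- p)) \<le> h0 t"
      by (simp add: h0_def indicator_def abs_le_iff)
    then show ?thesis
      by (intro add_increasing2) auto
  next
    case False
    have "jb t powr (- p) \<le> \<bar>t\<bar> powr (- p)"
      using False abs_le_jb[of t] assms by (intro powr_mono2') auto
    with False show ?thesis
      by (cases "0 \<le> t") (auto simp: h0_def h1_def h2_def indicator_def)
  qed
  have "jb_powr_integral p \<le> (\<integral>\<^sup>+ t. h0 t + h1 t + h2 t \<partial>lborel)"
    unfolding jb_powr_integral_def by (intro nn_integral_mono pointwise)
  also have "\<dots> = (\<integral>\<^sup>+ t. h0 t \<partial>lborel) + (\<integral>\<^sup>+ t. h1 t \<partial>lborel) + (\<integral>\<^sup>+ t. h2 t \<partial>lborel)"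
    by (simp add: nn_integral_add)
  also have "\<dots> < \<infinity>"
    using h0 h1 h2 by (simp only: ennreal_add_less_top) simp
  finally show ?thesis .
qed

lemma jb2_powr_integral_finite:
  assumes "2 < p"
  shows "jb2_powr_integral p < \<infinity>"
proof -
  have "ennreal (jb2 v powr (- p)) \<le> ennreal (jb (fst v) powr (- (p/2))) * ennreal (jb (snd v) powr (- (p/2)))" for v
  proof -
    have "jb2 v powr (- p) = jb2 v powr (- (p/2)) * jb2 v powr (- (p/2))"
      by (simp add: powr_add[symmetric])
    also have "\<dots> \<le> jb (fst v) powr (- (p/2)) * jb (snd v) powr (- (p/2))"
      using assms by (intro mult_mono jb2_powr_neg_le_jb_fst jb2_powr_neg_le_jb_snd) auto
    finally show ?thesis
      by (simp add: ennreal_mult[symmetric] ennreal_leI)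
  qed
  then have "jb2_powr_integral p \<le> (\<integral>\<^sup>+ v. ennreal (jb (fst v) powr (- (p/2))) * ennreal (jb (snd v) powr (- (p/2))) \<partial>lborel)"
    unfolding jb2_powr_integral_def by (intro nn_integral_mono)
  also have "\<dots> = jb_powr_integral (p/2) * jb_powr_integral (p/2)"
    unfolding jb_powr_integral_def by (rule nn_integral_lborel_tensor) measurable
  also have "\<dots> < \<infinity>"
    using jb_powr_integral_finite[of "p/2"] assms by (simp add: ennreal_mult_less_top)
  finally show ?thesis .
qed

section \<open>Sublevel sets of functions of one variable\<close>

lemma nn_integral_indicator_le_diameter:
  fixes S :: "real set"
  assumes "\<And>t u. t \<in> S \<Longrightarrow> u \<in> S \<Longrightarrow> \<bar>t - u\<bar> \<le> d"
  shows "(\<integral>\<^sup>+ t. indicator S t \<partial>lborel) \<le> ennreal (2 * d)"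
proof (cases "S = {}")
  case False
  then obtain t0 where t0: "t0 \<in> S" by auto
  then have "S \<subseteq> {t0 - d .. t0 + d}"
    using assms[OF _ t0] by (force simp: abs_le_iff)
  then have "(\<integral>\<^sup>+ t. indicator S t \<partial>lborel) \<le> (\<integral>\<^sup>+ t. indicator {t0 - d .. t0 + d} t \<partial>lborel)"
    by (intro nn_integral_mono) (auto simp: indicator_def)
  also have "\<dots> = ennreal (2 * d)"
    using assms[OF t0 t0] by simp
  finally show ?thesis .
qed simp

lemma sublevel_measure_le_of_steep:
  fixes g :: "real \<Rightarrow> real"
  assumes steep: "\<And>t u. t \<in> I \<Longrightarrow> u \<in> I \<Longrightarrow> L * \<bar>t - u\<bar> \<le> \<bar>g t - g u\<bar>" and "0 < L"
  shows "(\<integral>\<^sup>+ t. indicator {t \<in> I. \<bar>g t\<bar> < M} t \<partial>lborel) \<le> ennreal (4 * M / L)"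
proof -
  have diam: "\<bar>t - u\<bar> \<le> 2 * M / L" if "t \<in> {t \<in> I. \<bar>g t\<bar> < M}" "u \<in> {t \<in> I. \<bar>g t\<bar> < M}" for t u
  proof -
    have "L * \<bar>t - u\<bar> \<le> 2 * M"
      using steep[of t u] that abs_triangle_ineq4[of "g t" "g u"] by auto
    with \<open>0 < L\<close> show ?thesis
      by (simp add: field_simps)
  qed
  show ?thesis
    using nn_integral_indicator_le_diameter[of "{t \<in> I. \<bar>g t\<bar> < M}" "2 * M / L", OF diam] by simp
qed

text \<open>On either side of the vertex \<open>t\<^sub>0\<close> one has \<open>\<bar>g t - g u\<bar> = \<bar>a\<bar> \<bar>t - u\<bar> \<bar>(t - t\<^sub>0) + (u - t\<^sub>0)\<bar> \<ge> \<bar>a\<bar> \<bar>t - u\<bar>\<^sup>2\<close>.\<close>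
lemma sublevel_measure_le_quadratic:
  fixes a b c M :: real
  assumes "a \<noteq> 0" "0 \<le> M"
  shows "(\<integral>\<^sup>+ t. indicator {t. \<bar>a * t\<^sup>2 + b * t + c\<bar> < M} t \<partial>lborel) \<le> ennreal (4 * sqrt (2 * M / \<bar>a\<bar>))"
proof -
  define g where "g t = a * t\<^sup>2 + b * t + c" for t
  define t0 where "t0 = - b / (2 * a)"
  define S where "S = {t. \<bar>g t\<bar> < M}"
  define d where "d = sqrt (2 * M / \<bar>a\<bar>)"
  have diam: "\<bar>t - u\<bar> \<le> d" if "t \<in> S" "u \<in> S" "0 \<le> (t - t0) * (u - t0)" for t u
  proof -
    have "\<bar>t - u\<bar> \<le> \<bar>(t - t0) + (u - t0)\<bar>"
      using that(3) unfolding zero_le_mult_iff by auto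
    then have "\<bar>t - u\<bar> * \<bar>t - u\<bar> \<le> \<bar>t - u\<bar> * \<bar>(t - t0) + (u - t0)\<bar>"
      by (rule mult_left_mono) simp
    then have "\<bar>a\<bar> * (\<bar>t - u\<bar> * \<bar>t - u\<bar>) \<le> \<bar>a\<bar> * \<bar>t - u\<bar> * \<bar>(t - t0) + (u - t0)\<bar>"
      unfolding mult.assoc by (rule mult_left_mono) simp
    also have "\<dots> = \<bar>g t - g u\<bar>"
    proof -
      have "g t - g u = a * (t - u) * ((t - t0) + (u - t0))"
        using \<open>a \<noteq> 0\<close> by (simp add: g_def t0_def power2_eq_square field_simps)
      then show ?thesis
        by (simp add: abs_mult)
    qed
    also have "\<dots> < 2 * M"
      using that(1,2) by (auto simp: S_def)
    finally have "\<bar>t - u\<bar>\<^sup>2 \<le> 2 * M / \<bar>a\<bar>"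
      using \<open>a \<noteq> 0\<close> by (simp add: field_simps power2_eq_square)
    then show ?thesis
      by (simp add: d_def real_le_rsqrt)
  qed
  have [measurable]: "S \<in> sets borel"
    unfolding S_def g_def by measurable
  have "(\<integral>\<^sup>+ t. indicator S t \<partial>lborel)
      \<le> (\<integral>\<^sup>+ t. indicator (S \<inter> {t0..}) t + indicator (S \<inter> {..<t0}) t \<partial>lborel)"
    by (intro nn_integral_mono) (auto simp: indicator_def)
  also have "\<dots> = (\<integral>\<^sup>+ t. indicator (S \<inter> {t0..}) t \<partial>lborel) + (\<integral>\<^sup>+ t. indicator (S \<inter> {..<t0}) t \<partial>lborel)"
    by (rule nn_integral_add) auto
  also have "\<dots> \<le> ennreal (2 * d) + ennreal (2 * d)"
    by (intro add_mono nn_integral_indicator_le_diameter diam) (auto intro: mult_nonpos_nonpos)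
  also have "\<dots> = ennreal (4 * d)"
    using \<open>0 \<le> M\<close> by (simp add: d_def ennreal_plus[symmetric] del: ennreal_plus)
  finally show ?thesis
    by (simp add: S_def g_def d_def)
qed

section \<open>The resonance integral\<close>

lemma Phi_borel [measurable]: "(\<lambda>p. Phi \<xi> (fst p) (snd p) (\<xi> - fst p - snd p)) \<in> borel_measurable borel"
  unfolding Phi_def by (intro borel_measurable_continuous_onI continuous_intros)

lemma Phi_eq:
  "Phi \<xi> (x1, y1) (x2, y2) (\<xi> - (x1, y1) - (x2, y2))
     = (fst \<xi> - x1) * (fst \<xi> - x2) * (x1 + x2) + (snd \<xi> - y1) * (snd \<xi> - y2) * (y1 + y2)"
  by (cases \<xi>) (simp add: Phi_def algebra_simps)

definition resonant_set :: "real \<times> real \<Rightarrow> real \<Rightarrow> real \<Rightarrow> ((real \<times> real) \<times> (real \<times> real)) set" where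
  "resonant_set \<xi> \<alpha> M = {p. \<bar>Phi \<xi> (fst p) (snd p) (\<xi> - fst p - snd p) - \<alpha>\<bar> < M}"

lemma resonant_set_borel [measurable]: "resonant_set \<xi> \<alpha> M \<in> sets borel"
  unfolding resonant_set_def by measurable

lemma swap_mem_resonant_set: "prod.swap p \<in> resonant_set \<xi> \<alpha> M \<longleftrightarrow> p \<in> resonant_set \<xi> \<alpha> M"
  by (simp add: resonant_set_def Phi_def algebra_simps)

lemma map_prod_swap_mem_resonant_set:
  "(prod.swap a, prod.swap b) \<in> resonant_set (prod.swap \<xi>) \<alpha> M \<longleftrightarrow> (a, b) \<in> resonant_set \<xi> \<alpha> M"
  by (simp add: resonant_set_def Phi_def algebra_simps)

definition resonance_integral ::
  "real \<Rightarrow> real \<times> real \<Rightarrow> real \<Rightarrow> real \<Rightarrow> ((real \<times> real) \<times> (real \<times> real)) set \<Rightarrow> ennreal" where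
  "resonance_integral s \<xi> \<alpha> M R = (\<integral>\<^sup>+ p \<in> R \<inter> resonant_set \<xi> \<alpha> M.
      ennreal (jb2 (fst p) powr (- (2 * s)) * jb2 (snd p) powr (- (2 * s))) \<partial>lborel)"

lemma resonance_integral_mono:
  assumes "M \<le> M'" "R \<subseteq> R'"
  shows "resonance_integral s \<xi> \<alpha> M R \<le> resonance_integral s \<xi> \<alpha> M' R'"
  unfolding resonance_integral_def using assms
  by (intro nn_integral_mono mult_left_mono) (auto simp: resonant_set_def indicator_def)

lemma resonance_integral_le:
  "resonance_integral s \<xi> \<alpha> M R \<le> (jb2_powr_integral (2 * s))\<^sup>2"
proof -
  have "resonance_integral s \<xi> \<alpha> M R
      \<le> (\<integral>\<^sup>+ p. ennreal (jb2 (fst p) powr (- (2 * s))) * ennreal (jb2 (snd p) powr (- (2 * s))) \<partial>lborel)"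
    unfolding resonance_integral_def
    by (intro nn_integral_mono) (auto simp: indicator_def ennreal_mult)
  also have "\<dots> = (jb2_powr_integral (2 * s))\<^sup>2"
    unfolding jb2_powr_integral_def power2_eq_square by (rule nn_integral_lborel_tensor) measurable
  finally show ?thesis .
qed

lemma resonance_integral_Un:
  assumes "R \<in> sets borel" "R' \<in> sets borel" "R \<inter> R' = {}"
  shows "resonance_integral s \<xi> \<alpha> M (R \<union> R') = resonance_integral s \<xi> \<alpha> M R + resonance_integral s \<xi> \<alpha> M R'"
  unfolding resonance_integral_def Int_Un_distrib2
  using assms by (intro nn_integral_disjoint_pair) auto

lemma resonance_integral_split:
  assumes [measurable]: "B \<in> sets borel"
  shows "resonance_integral s \<xi> \<alpha> M UNIV
    = resonance_integral s \<xi> \<alpha> M (B \<times> B) + resonance_integral s \<xi> \<alpha> M ((- B) \<times> (- B))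
    + resonance_integral s \<xi> \<alpha> M ((- B) \<times> B) + resonance_integral s \<xi> \<alpha> M (B \<times> (- B))"
proof -
  note borel_Times[measurable]
  have "resonance_integral s \<xi> \<alpha> M UNIV
      = resonance_integral s \<xi> \<alpha> M ((B \<times> B) \<union> ((- B) \<times> (- B)) \<union> ((- B) \<times> B) \<union> (B \<times> (- B)))"
    by (rule arg_cong[where f = "resonance_integral s \<xi> \<alpha> M"]) auto
  also have "\<dots> = resonance_integral s \<xi> \<alpha> M ((B \<times> B) \<union> ((- B) \<times> (- B)) \<union> ((- B) \<times> B))
      + resonance_integral s \<xi> \<alpha> M (B \<times> (- B))"
    by (rule resonance_integral_Un) (auto intro!: borel_Times)
  also have "resonance_integral s \<xi> \<alpha> M ((B \<times> B) \<union> ((- B) \<times> (- B)) \<union> ((- B) \<times> B))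
      = resonance_integral s \<xi> \<alpha> M ((B \<times> B) \<union> ((- B) \<times> (- B))) + resonance_integral s \<xi> \<alpha> M ((- B) \<times> B)"
    by (rule resonance_integral_Un) (auto intro!: borel_Times)
  also have "resonance_integral s \<xi> \<alpha> M ((B \<times> B) \<union> ((- B) \<times> (- B)))
      = resonance_integral s \<xi> \<alpha> M (B \<times> B) + resonance_integral s \<xi> \<alpha> M ((- B) \<times> (- B))"
    by (rule resonance_integral_Un) (auto intro!: borel_Times)
  finally show ?thesis .
qed

lemma resonance_integral_Times_commute:
  assumes [measurable]: "A \<in> sets borel" "B \<in> sets borel"
  shows "resonance_integral s \<xi> \<alpha> M (A \<times> B) = resonance_integral s \<xi> \<alpha> M (B \<times> A)"
proof -
  have [measurable]: "B \<times> A \<in> sets borel"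
    by (simp add: borel_Times)
  let ?f = "\<lambda>p. ennreal (jb2 (fst p) powr (- (2 * s)) * jb2 (snd p) powr (- (2 * s)))
    * indicator (B \<times> A \<inter> resonant_set \<xi> \<alpha> M) p"
  have "resonance_integral s \<xi> \<alpha> M (B \<times> A) = (\<integral>\<^sup>+ p. ?f (prod.swap p) \<partial>lborel)"
    unfolding resonance_integral_def by (rule nn_integral_lborel_swap[symmetric]) measurable
  also have "\<dots> = resonance_integral s \<xi> \<alpha> M (A \<times> B)"
    unfolding resonance_integral_def
    by (intro nn_integral_cong) (auto simp: indicator_def swap_mem_resonant_set[of "(_, _)", simplified] ac_simps)
  finally show ?thesis ..
qed

lemma resonance_integral_swap_coordinates:
  "resonance_integral s (prod.swap \<xi>) \<alpha> M UNIV = resonance_integral s \<xi> \<alpha> M UNIV"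
proof -
  let ?f = "\<lambda>p. ennreal (jb2 (fst p) powr (- (2 * s)) * jb2 (snd p) powr (- (2 * s)))
    * indicator (UNIV \<inter> resonant_set (prod.swap \<xi>) \<alpha> M) p"
  have "resonance_integral s (prod.swap \<xi>) \<alpha> M UNIV = (\<integral>\<^sup>+ p. ?f (prod.swap (fst p), prod.swap (snd p)) \<partial>lborel)"
    unfolding resonance_integral_def by (rule nn_integral_lborel_map_prod_swap[symmetric]) measurable
  also have "\<dots> = resonance_integral s \<xi> \<alpha> M UNIV"
    unfolding resonance_integral_def
    by (intro nn_integral_cong) (simp add: indicator_def jb2_swap map_prod_swap_mem_resonant_set[of "fst _" "snd _", simplified])
  finally show ?thesis .
qed

lemma resonance_integral_fiberwise_le:
  assumes [measurable]: "R \<in> sets borel" and "0 \<le> L" "0 \<le> c"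
    and fiber: "\<And>y1 \<xi>2. (\<integral>\<^sup>+ x1. indicator (R \<inter> resonant_set \<xi> \<alpha> M) ((x1, y1), \<xi>2) \<partial>lborel) \<le> ennreal L"
    and weight: "\<And>x1 y1 \<xi>2. ((x1, y1), \<xi>2) \<in> R \<Longrightarrow> jb2 (x1, y1) powr (- (2 * s)) \<le> c * jb y1 powr (- q)"
  shows "resonance_integral s \<xi> \<alpha> M R \<le> ennreal (L * c) * jb_powr_integral q * jb2_powr_integral (2 * s)"
  unfolding resonance_integral_def jb_powr_integral_def jb2_powr_integral_def
proof (rule nn_integral_fiberwise_le)
  fix y1 and \<xi>2 :: "real \<times> real"
  let ?S = "R \<inter> resonant_set \<xi> \<alpha> M"
  have "ennreal (jb2 (x1, y1) powr (- (2 * s)) * jb2 \<xi>2 powr (- (2 * s))) * indicator ?S ((x1, y1), \<xi>2)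
      \<le> indicator ?S ((x1, y1), \<xi>2) * ennreal (c * jb y1 powr (- q) * jb2 \<xi>2 powr (- (2 * s)))" for x1
    using weight[of x1 y1 \<xi>2] by (auto simp: indicator_def intro!: ennreal_leI mult_right_mono)
  then have "(\<integral>\<^sup>+ x1. ennreal (jb2 (x1, y1) powr (- (2 * s)) * jb2 \<xi>2 powr (- (2 * s)))
        * indicator ?S ((x1, y1), \<xi>2) \<partial>lborel)
      \<le> (\<integral>\<^sup>+ x1. indicator ?S ((x1, y1), \<xi>2) \<partial>lborel) * ennreal (c * jb y1 powr (- q) * jb2 \<xi>2 powr (- (2 * s)))"
    by (subst nn_integral_multc[symmetric]) (auto intro: nn_integral_mono)
  also have "\<dots> \<le> ennreal L * ennreal (c * jb y1 powr (- q) * jb2 \<xi>2 powr (- (2 * s)))"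
    by (intro mult_right_mono fiber) simp
  also have "\<dots> = ennreal (L * c) * ennreal (jb y1 powr (- q)) * ennreal (jb2 \<xi>2 powr (- (2 * s)))"
    using \<open>0 \<le> L\<close> \<open>0 \<le> c\<close> by (simp add: ennreal_mult[symmetric] mult.assoc)
  finally show "(\<integral>\<^sup>+ x1. ennreal (jb2 (fst ((x1, y1), \<xi>2)) powr (- (2 * s)) * jb2 (snd ((x1, y1), \<xi>2)) powr (- (2 * s)))
        * indicator ?S ((x1, y1), \<xi>2) \<partial>lborel)
      \<le> ennreal (L * c) * ennreal (jb y1 powr (- q)) * ennreal (jb2 \<xi>2 powr (- (2 * s)))"
    by simp
qed measurable

lemma abs_le_norm_Pair1: "\<bar>a\<bar> \<le> norm (a :: real, b :: real)"
  by (simp add: norm_Pair)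

lemma abs_ge_of_power2_le:
  fixes N x :: real
  assumes "0 < N" "N\<^sup>2 \<le> 2 * x\<^sup>2"
  shows "7/10 * N \<le> \<bar>x\<bar>"
proof -
  have "(7/10 * N)\<^sup>2 = 49/100 * N\<^sup>2"
    by (simp add: power2_eq_square)
  then have "(7/10 * N)\<^sup>2 \<le> x\<^sup>2"
    using assms(2) zero_le_power2[of N] by linarith
  then show ?thesis
    using assms(1) by (simp add: abs_le_square_iff[symmetric])
qed

lemma cubic_phase_difference_ge:
  fixes N x x2 t u :: real
  assumes "0 < N" "7/10 * N \<le> \<bar>x\<bar>" "\<bar>x2\<bar> \<le> N/8" "\<bar>t\<bar> \<le> N/8" "\<bar>u\<bar> \<le> N/8"
  shows "N\<^sup>2 / 7 * \<bar>t - u\<bar> \<le> \<bar>(x - t) * (x - x2) * (t + x2) - (x - u) * (x - x2) * (u + x2)\<bar>"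
proof -
  have "N\<^sup>2 / 7 \<le> N / 2 * (3/10 * N)"
    using zero_le_power2[of N] by (simp add: power2_eq_square)
  also have "\<dots> \<le> \<bar>x - x2\<bar> * \<bar>t + u - (x - x2)\<bar>"
  proof (rule mult_mono)
    show "N / 2 \<le> \<bar>x - x2\<bar>" "3/10 * N \<le> \<bar>t + u - (x - x2)\<bar>"
      using assms abs_triangle_ineq2[of x x2] abs_triangle_ineq2[of "x - x2" "t + u"]
        abs_triangle_ineq[of t u] abs_minus_commute[of "x - x2" "t + u"]
      by linarith+
  qed (use \<open>0 < N\<close> in simp_all)
  finally have "\<bar>t - u\<bar> * (N\<^sup>2 / 7) \<le> \<bar>t - u\<bar> * (\<bar>x - x2\<bar> * \<bar>t + u - (x - x2)\<bar>)"
    by (rule mult_left_mono) simp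
  also have "\<dots> = \<bar>(x - t) * (x - x2) * (t + x2) - (x - u) * (x - x2) * (u + x2)\<bar>"
    by (simp add: abs_mult[symmetric] algebra_simps)
  finally show ?thesis
    by (simp only: mult.commute)
qed

text \<open>Both frequencies small and \<open>\<bar>x\<bar> \<approx> \<bar>\<xi>\<bar>\<close>: the phase has \<open>x\<^sub>1\<close>-derivative of size \<open>\<bar>\<xi>\<bar>\<^sup>2\<close>.\<close>
lemma resonant_fiber_low_low:
  assumes "0 < N" "N\<^sup>2 \<le> 2 * (fst \<xi>)\<^sup>2"
  shows "(\<integral>\<^sup>+ x1. indicator (cball 0 (N/8) \<times> cball 0 (N/8) \<inter> resonant_set \<xi> \<alpha> M) ((x1, y1), \<xi>2) \<partial>lborel)
    \<le> ennreal (28 * M / N\<^sup>2)"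
proof -
  obtain x2 y2 where \<xi>2: "\<xi>2 = (x2, y2)" by fastforce
  define x where "x = fst \<xi>"
  define g where "g t = (x - t) * (x - x2) * (t + x2) + (snd \<xi> - y1) * (snd \<xi> - y2) * (y1 + y2) - \<alpha>" for t
  let ?S = "cball 0 (N/8) \<times> cball 0 (N/8) \<inter> resonant_set \<xi> \<alpha> M"
  show ?thesis
  proof (cases "\<bar>x2\<bar> \<le> N/8")
    case True
    have x: "7/10 * N \<le> \<bar>x\<bar>"
      using abs_ge_of_power2_le assms by (simp add: x_def)
    have steep: "N\<^sup>2 / 7 * \<bar>t - u\<bar> \<le> \<bar>g t - g u\<bar>"
      if "t \<in> {t. \<bar>t\<bar> \<le> N/8}" "u \<in> {t. \<bar>t\<bar> \<le> N/8}" for t u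
      using cubic_phase_difference_ge[of N x x2 t u] that x True \<open>0 < N\<close> by (simp add: g_def)
    have "indicator ?S ((x1, y1), \<xi>2) \<le> (indicator {t \<in> {t. \<bar>t\<bar> \<le> N/8}. \<bar>g t\<bar> < M} x1 :: ennreal)" for x1
      using abs_le_norm_Pair1[of x1 y1]
      by (auto simp: \<xi>2 indicator_def resonant_set_def Phi_eq g_def x_def)
    then have "(\<integral>\<^sup>+ x1. indicator ?S ((x1, y1), \<xi>2) \<partial>lborel)
        \<le> (\<integral>\<^sup>+ t. indicator {t \<in> {t. \<bar>t\<bar> \<le> N/8}. \<bar>g t\<bar> < M} t \<partial>lborel)"
      by (intro nn_integral_mono)
    also have "\<dots> \<le> ennreal (4 * M / (N\<^sup>2 / 7))"
      by (rule sublevel_measure_le_of_steep[OF steep]) (use \<open>0 < N\<close> in auto)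
    finally show ?thesis
      using \<open>0 < N\<close> by simp
  next
    case False
    then have "\<xi>2 \<notin> cball 0 (N/8)"
      using abs_le_norm_Pair1[of x2 y2] by (auto simp: \<xi>2)
    then show ?thesis
      by (simp add: indicator_def)
  qed
qed

text \<open>A large first frequency and \<open>\<bar>x\<bar> \<approx> \<bar>\<xi>\<bar>\<close>: the phase is a parabola in \<open>x\<^sub>1\<close> with leading coefficient of size \<open>\<bar>\<xi>\<bar>\<close>.\<close>
lemma resonant_fiber_high_low:
  assumes "0 < N" "N\<^sup>2 \<le> 2 * (fst \<xi>)\<^sup>2" "0 \<le> M"
  shows "(\<integral>\<^sup>+ x1. indicator ((- cball 0 (N/8)) \<times> cball 0 (N/8) \<inter> resonant_set \<xi> \<alpha> M) ((x1, y1), \<xi>2) \<partial>lborel)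
    \<le> ennreal (4 * sqrt (4 * M / N))"
proof -
  obtain x2 y2 where \<xi>2: "\<xi>2 = (x2, y2)" by fastforce
  define x where "x = fst \<xi>"
  define c where "c = (x - x2) * x * x2 + (snd \<xi> - y1) * (snd \<xi> - y2) * (y1 + y2) - \<alpha>"
  let ?S = "(- cball 0 (N/8)) \<times> cball 0 (N/8) \<inter> resonant_set \<xi> \<alpha> M"
  show ?thesis
  proof (cases "\<bar>x2\<bar> \<le> N/8")
    case True
    have "7/10 * N \<le> \<bar>x\<bar>"
      using abs_ge_of_power2_le assms by (simp add: x_def)
    with True have x_x2: "N / 2 \<le> \<bar>x - x2\<bar>"
      by linarith
    have "indicator ?S ((x1, y1), \<xi>2)
        \<le> (indicator {t. \<bar>(- (x - x2)) * t\<^sup>2 + (x - x2)\<^sup>2 * t + c\<bar> < M} x1 :: ennreal)" for x1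
    proof -
      have "Phi \<xi> (x1, y1) \<xi>2 (\<xi> - (x1, y1) - \<xi>2) - \<alpha> = (- (x - x2)) * x1\<^sup>2 + (x - x2)\<^sup>2 * x1 + c"
        unfolding \<xi>2 Phi_eq by (simp add: x_def c_def power2_eq_square algebra_simps)
      then show ?thesis
        by (simp add: indicator_def resonant_set_def)
    qed
    then have "(\<integral>\<^sup>+ x1. indicator ?S ((x1, y1), \<xi>2) \<partial>lborel)
        \<le> (\<integral>\<^sup>+ t. indicator {t. \<bar>(- (x - x2)) * t\<^sup>2 + (x - x2)\<^sup>2 * t + c\<bar> < M} t \<partial>lborel)"
      by (intro nn_integral_mono)
    also have "\<dots> \<le> ennreal (4 * sqrt (2 * M / \<bar>x - x2\<bar>))"
    proof -
      have "- (x - x2) \<noteq> 0"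
        using x_x2 \<open>0 < N\<close> by auto
      from sublevel_measure_le_quadratic[OF this \<open>0 \<le> M\<close>] show ?thesis
        by (simp add: abs_minus_commute)
    qed
    also have "\<dots> \<le> ennreal (4 * sqrt (4 * M / N))"
    proof -
      have "0 < \<bar>x - x2\<bar>"
        using x_x2 \<open>0 < N\<close> by linarith
      with x_x2 \<open>0 < N\<close> \<open>0 \<le> M\<close> have "2 * M / \<bar>x - x2\<bar> \<le> 2 * M / (N / 2)"
        by (intro divide_left_mono) auto
      then show ?thesis
        by (intro ennreal_leI mult_left_mono real_sqrt_le_mono) auto
    qed
    finally show ?thesis .
  next
    case False
    then have "\<xi>2 \<notin> cball 0 (N/8)"
      using abs_le_norm_Pair1[of x2 y2] by (auto simp: \<xi>2)
    then show ?thesis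
      by (simp add: indicator_def)
  qed
qed

lemma resonance_integral_low_low:
  assumes "0 \<le> s" "0 < N" "N\<^sup>2 \<le> 2 * (fst \<xi>)\<^sup>2" "0 \<le> M"
  shows "resonance_integral s \<xi> \<alpha> M (cball 0 (N/8) \<times> cball 0 (N/8))
    \<le> ennreal (28 * M / N\<^sup>2) * jb_powr_integral (2 * s) * jb2_powr_integral (2 * s)"
proof -
  have "resonance_integral s \<xi> \<alpha> M (cball 0 (N/8) \<times> cball 0 (N/8))
      \<le> ennreal (28 * M / N\<^sup>2 * 1) * jb_powr_integral (2 * s) * jb2_powr_integral (2 * s)"
    using assms resonant_fiber_low_low
    by (intro resonance_integral_fiberwise_le) (auto intro: jb2_powr_neg_le_jb_snd[of _ "(_, _)", simplified] borel_Times)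
  then show ?thesis
    by simp
qed

lemma resonance_integral_high_low:
  assumes "1/4 \<le> s" "0 < N" "N\<^sup>2 \<le> 2 * (fst \<xi>)\<^sup>2" "0 \<le> M"
  shows "resonance_integral s \<xi> \<alpha> M ((- cball 0 (N/8)) \<times> cball 0 (N/8))
    \<le> ennreal (4 * sqrt (4 * M / N) * (N/8) powr (- (s + 1/4))) * jb_powr_integral (s - 1/4) * jb2_powr_integral (2 * s)"
proof (rule resonance_integral_fiberwise_le)
  fix x1 y1 :: real and \<xi>2 :: "real \<times> real"
  assume "((x1, y1), \<xi>2) \<in> (- cball 0 (N/8)) \<times> cball 0 (N/8)"
  then have "N/8 \<le> norm (x1, y1)"
    by simp
  then have "jb2 (x1, y1) powr (- ((s + 1/4) + (s - 1/4))) \<le> (N/8) powr (- (s + 1/4)) * jb2 (x1, y1) powr (- (s - 1/4))"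
    using assms by (intro jb2_powr_neg_add_le) auto
  also have "\<dots> \<le> (N/8) powr (- (s + 1/4)) * jb y1 powr (- (s - 1/4))"
    using assms jb2_powr_neg_le_jb_snd[of "s - 1/4" "(x1, y1)"] by (intro mult_left_mono) auto
  finally show "jb2 (x1, y1) powr (- (2 * s)) \<le> (N/8) powr (- (s + 1/4)) * jb y1 powr (- (s - 1/4))"
    by simp
qed (use assms resonant_fiber_high_low in \<open>auto intro: borel_Times\<close>)

lemma resonance_integral_high_high:
  assumes "1/2 \<le> s" "0 < N"
  shows "resonance_integral s \<xi> \<alpha> M ((- cball 0 (N/8)) \<times> (- cball 0 (N/8)))
    \<le> ennreal (((N/8) powr (- (s - 1/2)))\<^sup>2) * (jb2_powr_integral (s + 1/2))\<^sup>2"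
proof -
  define K where "K = (N/8) powr (- (s - 1/2))"
  have weight: "jb2 v powr (- (2 * s)) \<le> K * jb2 v powr (- (s + 1/2))" if "N/8 < norm v" for v
    using jb2_powr_neg_add_le[of "N/8" v "s - 1/2" "s + 1/2"] that assms by (simp add: K_def)
  have "ennreal (jb2 (fst p) powr (- (2 * s)) * jb2 (snd p) powr (- (2 * s)))
        * indicator ((- cball 0 (N/8)) \<times> (- cball 0 (N/8)) \<inter> resonant_set \<xi> \<alpha> M) p
      \<le> ennreal (K * jb2 (fst p) powr (- (s + 1/2))) * ennreal (K * jb2 (snd p) powr (- (s + 1/2)))" for p
  proof (cases "p \<in> (- cball 0 (N/8)) \<times> (- cball 0 (N/8))")
    case True
    then have "jb2 (fst p) powr (- (2 * s)) * jb2 (snd p) powr (- (2 * s))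
        \<le> (K * jb2 (fst p) powr (- (s + 1/2))) * (K * jb2 (snd p) powr (- (s + 1/2)))"
      by (intro mult_mono weight) (auto simp: K_def)
    then show ?thesis
      by (auto simp: indicator_def ennreal_mult[symmetric] K_def intro: ennreal_leI)
  qed (simp add: indicator_def)
  then have "resonance_integral s \<xi> \<alpha> M ((- cball 0 (N/8)) \<times> (- cball 0 (N/8)))
      \<le> (\<integral>\<^sup>+ p. ennreal (K * jb2 (fst p) powr (- (s + 1/2))) * ennreal (K * jb2 (snd p) powr (- (s + 1/2))) \<partial>lborel)"
    unfolding resonance_integral_def by (intro nn_integral_mono)
  also have "\<dots> = (\<integral>\<^sup>+ v. ennreal (K * jb2 v powr (- (s + 1/2))) \<partial>lborel)\<^sup>2"
    unfolding power2_eq_square by (rule nn_integral_lborel_tensor) measurable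
  also have "\<dots> = ennreal (K\<^sup>2) * (jb2_powr_integral (s + 1/2))\<^sup>2"
    unfolding jb2_powr_integral_def
    by (simp add: K_def ennreal_mult nn_integral_cmult power_mult_distrib ennreal_power)
  finally show ?thesis
    by (simp add: K_def)
qed

lemma powr_mult_powr_divide_le:
  fixes N c a b :: real
  assumes "1 \<le> N" "0 < c" "a \<le> b"
  shows "N powr a * (N / c) powr (- b) \<le> c powr b"
proof -
  have "(N / c) powr (- b) = c powr b / N powr b"
    using assms by (simp add: powr_divide powr_minus_divide)
  then have "N powr a * (N / c) powr (- b) = c powr b * N powr (a - b)"
    by (simp add: powr_diff)
  also have "\<dots> \<le> c powr b * 1"
    using assms powr_mono[of "a - b" 0 N] by (intro mult_left_mono) auto
  finally show ?thesis
    by simp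
qed

text \<open>The powers of \<open>\<bar>\<xi>\<bar> = N\<close> gained in the three regions beat the factor \<open>\<langle>\<xi>\<rangle>\<^sup>2 = 1 + N\<^sup>2\<close>.\<close>
lemma resonance_factor_low_low_le:
  fixes N M :: real
  assumes "1 \<le> N" "0 \<le> M"
  shows "(1 + N\<^sup>2) * (28 * M / N\<^sup>2) \<le> M * 56"
proof -
  have "(1 + N\<^sup>2) * (28 * M / N\<^sup>2) \<le> (2 * N\<^sup>2) * (28 * M / N\<^sup>2)"
    using assms one_le_power[of N 2] by (intro mult_right_mono) auto
  also have "\<dots> = M * 56"
    using assms by simp
  finally show ?thesis .
qed

lemma resonance_factor_high_high_le:
  fixes N M s :: real
  assumes "1 \<le> N" "3/2 \<le> s" "1 \<le> M"
  shows "(1 + N\<^sup>2) * ((N/8) powr (- (s - 1/2)))\<^sup>2 \<le> M * (2 * 8 powr (2 * s - 1))"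
proof -
  have "1 + N\<^sup>2 \<le> 2 * N\<^sup>2"
    using assms one_le_power[of N 2] by simp
  moreover have "((N/8) powr (- (s - 1/2)))\<^sup>2 = (N/8) powr (- (2 * s - 1))"
    by (simp add: power2_eq_square powr_add[symmetric])
  ultimately have "(1 + N\<^sup>2) * ((N/8) powr (- (s - 1/2)))\<^sup>2 \<le> 2 * (N powr 2 * (N/8) powr (- (2 * s - 1)))"
    using assms by (simp add: mult_right_mono)
  also have "\<dots> \<le> 2 * 8 powr (2 * s - 1)"
    using powr_mult_powr_divide_le[of N 8 2 "2 * s - 1"] assms by simp
  also have "\<dots> \<le> M * (2 * 8 powr (2 * s - 1))"
    using assms by simp
  finally show ?thesis .
qed

lemma resonance_factor_high_low_le:
  fixes N M s :: real
  assumes "1 \<le> N" "5/4 \<le> s" "1 \<le> M"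
  shows "(1 + N\<^sup>2) * (4 * sqrt (4 * M / N) * (N/8) powr (- (s + 1/4))) \<le> M * (16 * 8 powr (s + 1/4))"
proof -
  define X where "X = (N/8) powr (- (s + 1/4))"
  have N0: "0 < N" and N2: "1 + N\<^sup>2 \<le> 2 * N\<^sup>2"
    using assms one_le_power[of N 2] by simp_all
  have sqrt_M: "sqrt M \<le> M"
    using assms mult_left_mono[of 1 "sqrt M" "sqrt M"] by simp
  have "N powr (3/2) = N powr (2 + - (1/2))"
    by simp
  also have "\<dots> = N\<^sup>2 * inverse (sqrt N)"
    using N0 by (simp only: powr_add powr_minus) (simp add: powr_half_sqrt)
  finally have N32: "N powr (3/2) = N\<^sup>2 * inverse (sqrt N)" .
  have sqrt_4M_N: "sqrt (4 * M / N) = 2 * sqrt M * inverse (sqrt N)"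
    by (simp add: real_sqrt_divide real_sqrt_mult real_sqrt_inverse divide_inverse)
  have "(1 + N\<^sup>2) * (4 * sqrt (4 * M / N) * X) \<le> 2 * N\<^sup>2 * (4 * sqrt (4 * M / N) * X)"
    by (rule mult_right_mono[OF N2]) (use N0 assms in \<open>simp add: X_def\<close>)
  also have "\<dots> = 16 * sqrt M * (N powr (3/2) * X)"
    unfolding N32 sqrt_4M_N by (simp add: ac_simps)
  also have "\<dots> \<le> (16 * M) * 8 powr (s + 1/4)"
    using powr_mult_powr_divide_le[of N 8 "3/2" "s + 1/4"] assms sqrt_M
    by (intro mult_mono) (simp_all add: X_def)
  finally show ?thesis
    by (simp add: X_def ac_simps)
qed

lemma ennreal_mult_le_rescale:
  fixes a b c d :: real
  assumes "X \<le> ennreal b * Y" "a * b \<le> c * d" "0 \<le> a" "0 \<le> b" "0 \<le> c" "0 \<le> d"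
  shows "ennreal a * X \<le> ennreal c * (ennreal d * Y)"
proof -
  have "ennreal a * X \<le> ennreal (a * b) * Y"
    using mult_left_mono[OF assms(1), of "ennreal a"] assms(3,4) by (simp add: ennreal_mult mult.assoc)
  also have "\<dots> \<le> ennreal (c * d) * Y"
    using assms(2) by (intro mult_right_mono ennreal_leI) auto
  finally show ?thesis
    using assms(5,6) by (simp add: ennreal_mult mult.assoc)
qed

lemma resonance_integral_x_dominant:
  assumes "3/2 < s"
  obtains C where "C < \<infinity>"
    and "\<And>\<xi> \<alpha> M. 1 \<le> norm \<xi> \<Longrightarrow> (norm \<xi>)\<^sup>2 \<le> 2 * (fst \<xi>)\<^sup>2 \<Longrightarrow> 1 \<le> M \<Longrightarrow>
      ennreal ((jb2 \<xi>)\<^sup>2) * resonance_integral s \<xi> \<alpha> M UNIV \<le> ennreal M * C"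
proof
  let ?Ia = "jb_powr_integral (2 * s) * jb2_powr_integral (2 * s)"
  let ?Ib = "(jb2_powr_integral (s + 1/2))\<^sup>2"
  let ?Ic = "jb_powr_integral (s - 1/4) * jb2_powr_integral (2 * s)"
  let ?C = "ennreal 56 * ?Ia + ennreal (2 * 8 powr (2 * s - 1)) * ?Ib + 2 * (ennreal (16 * 8 powr (s + 1/4)) * ?Ic)"
  show "?C < \<infinity>"
    using assms jb_powr_integral_finite[of "2 * s"] jb_powr_integral_finite[of "s - 1/4"]
      jb2_powr_integral_finite[of "2 * s"] jb2_powr_integral_finite[of "s + 1/2"]
    by (simp add: ennreal_mult_less_top power2_eq_square)
  fix \<xi> :: "real \<times> real" and \<alpha> M :: real
  assume N: "1 \<le> norm \<xi>" and x_dominant: "(norm \<xi>)\<^sup>2 \<le> 2 * (fst \<xi>)\<^sup>2" and M: "1 \<le> M"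
  define N where "N = norm \<xi>"
  define B where "B = cball (0 :: real \<times> real) (N/8)"
  let ?K = "resonance_integral s \<xi> \<alpha> M"
  have N0: "0 < N"
    using N unfolding N_def by linarith
  have jb2: "(jb2 \<xi>)\<^sup>2 = 1 + N\<^sup>2"
    by (simp add: N_def jb2_power2)
  have "ennreal ((jb2 \<xi>)\<^sup>2) * ?K (B \<times> B) \<le> ennreal M * (ennreal 56 * ?Ia)"
    using resonance_integral_low_low[of s N \<xi> M \<alpha>] resonance_factor_low_low_le[of N M] assms N0 N M x_dominant
    by (intro ennreal_mult_le_rescale[where b = "28 * M / N\<^sup>2"]) (simp_all add: B_def N_def jb2 mult.assoc)
  moreover have "ennreal ((jb2 \<xi>)\<^sup>2) * ?K ((- B) \<times> (- B)) \<le> ennreal M * (ennreal (2 * 8 powr (2 * s - 1)) * ?Ib)"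
    using resonance_integral_high_high[of s N \<xi> \<alpha> M] resonance_factor_high_high_le[of N s M] assms N0 N M
    by (intro ennreal_mult_le_rescale[where b = "((N/8) powr (- (s - 1/2)))\<^sup>2"]) (simp_all add: B_def N_def jb2)
  moreover have "ennreal ((jb2 \<xi>)\<^sup>2) * ?K ((- B) \<times> B) \<le> ennreal M * (ennreal (16 * 8 powr (s + 1/4)) * ?Ic)"
    using resonance_integral_high_low[of s N \<xi> M \<alpha>] resonance_factor_high_low_le[of N s M] assms N0 N M x_dominant
    by (intro ennreal_mult_le_rescale[where b = "4 * sqrt (4 * M / N) * (N/8) powr (- (s + 1/4))"])
      (simp_all add: B_def N_def jb2 mult.assoc)
  moreover have "?K UNIV = ?K (B \<times> B) + ?K ((- B) \<times> (- B)) + ?K ((- B) \<times> B) + ?K ((- B) \<times> B)"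
    using resonance_integral_split[of B] resonance_integral_Times_commute[of B "- B"] by (simp add: B_def)
  ultimately have "ennreal ((jb2 \<xi>)\<^sup>2) * ?K UNIV
      \<le> ennreal M * (ennreal 56 * ?Ia) + ennreal M * (ennreal (2 * 8 powr (2 * s - 1)) * ?Ib)
        + ennreal M * (ennreal (16 * 8 powr (s + 1/4)) * ?Ic) + ennreal M * (ennreal (16 * 8 powr (s + 1/4)) * ?Ic)"
    by (simp only: distrib_left) (intro add_mono)
  also have "\<dots> = ennreal M * ?C"
    by (simp only: distrib_left mult_2 add.assoc)
  finally show "ennreal ((jb2 \<xi>)\<^sup>2) * ?K UNIV \<le> ennreal M * ?C" .
qed

lemma resonance_integral_bound:
  assumes "3/2 < s"
  obtains C where "C < \<infinity>"
    and "\<And>\<xi> \<alpha> M. 1 \<le> M \<Longrightarrow> ennreal ((jb2 \<xi>)\<^sup>2) * resonance_integral s \<xi> \<alpha> M UNIV \<le> ennreal M * C"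
proof -
  obtain Cx where "Cx < \<infinity>" and x_dominant: "\<And>\<xi> \<alpha> M. 1 \<le> norm \<xi> \<Longrightarrow> (norm \<xi>)\<^sup>2 \<le> 2 * (fst \<xi>)\<^sup>2 \<Longrightarrow> 1 \<le> M \<Longrightarrow>
      ennreal ((jb2 \<xi>)\<^sup>2) * resonance_integral s \<xi> \<alpha> M UNIV \<le> ennreal M * Cx"
    using resonance_integral_x_dominant[OF assms] by blast
  let ?C = "Cx + 2 * (jb2_powr_integral (2 * s))\<^sup>2"
  have "?C < \<infinity>"
    using \<open>Cx < \<infinity>\<close> jb2_powr_integral_finite[of "2 * s"] assms by (simp add: power2_eq_square ennreal_mult_less_top)
  moreover have "ennreal ((jb2 \<xi>)\<^sup>2) * resonance_integral s \<xi> \<alpha> M UNIV \<le> ennreal M * ?C"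
    if M: "1 \<le> M" for \<xi> \<alpha> M
  proof (cases "norm \<xi> < 1")
    case True
    then have "(jb2 \<xi>)\<^sup>2 \<le> 2"
      using power_mono[of "norm \<xi>" 1 2] by (simp add: jb2_power2)
    then have "ennreal ((jb2 \<xi>)\<^sup>2) * resonance_integral s \<xi> \<alpha> M UNIV \<le> 2 * (jb2_powr_integral (2 * s))\<^sup>2"
      using resonance_integral_le[of s \<xi> \<alpha> M UNIV] by (intro mult_mono) (auto simp: ennreal_leI[of _ 2, simplified])
    also have "\<dots> \<le> ennreal M * ?C"
      using M mult_mono[of 1 "ennreal M" "2 * (jb2_powr_integral (2 * s))\<^sup>2" ?C] by simp
    finally show ?thesis .
  next
    case False
    have "ennreal ((jb2 \<xi>)\<^sup>2) * resonance_integral s \<xi> \<alpha> M UNIV \<le> ennreal M * Cx"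
    proof (cases "(norm \<xi>)\<^sup>2 \<le> 2 * (fst \<xi>)\<^sup>2")
      case True
      with False M show ?thesis
        by (intro x_dominant) auto
    next
      case x_small: False
      have "(norm (prod.swap \<xi>))\<^sup>2 \<le> 2 * (fst (prod.swap \<xi>))\<^sup>2"
        using x_small by (cases \<xi>) (simp add: norm_Pair)
      with False M x_dominant[of "prod.swap \<xi>" M \<alpha>] show ?thesis
        by (simp add: norm_swap jb2_swap resonance_integral_swap_coordinates)
    qed
    also have "\<dots> \<le> ennreal M * ?C"
      by (intro mult_left_mono) auto
    finally show ?thesis .
  qed
  ultimately show ?thesis
    using that by blast
qed

section \<open>Symmetrization and Cauchy-Schwarz\<close>

definition conv3 :: "real \<times> real \<Rightarrow> (real \<times> real \<Rightarrow> real \<times> real \<Rightarrow> real \<times> real \<Rightarrow> ennreal) \<Rightarrow> ennreal" where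
  "conv3 \<xi> h = (\<integral>\<^sup>+ p. h (fst p) (snd p) (\<xi> - fst p - snd p) \<partial>lborel)"

definition measurable3 :: "(real \<times> real \<Rightarrow> real \<times> real \<Rightarrow> real \<times> real \<Rightarrow> ennreal) \<Rightarrow> bool" where
  "measurable3 h \<longleftrightarrow> (\<lambda>q. h (fst q) (fst (snd q)) (snd (snd q))) \<in> borel_measurable borel"

lemma measurable3_compose:
  fixes f1 f2 f3 :: "'a::euclidean_space \<Rightarrow> real \<times> real"
  assumes "measurable3 h" "f1 \<in> borel_measurable borel" "f2 \<in> borel_measurable borel" "f3 \<in> borel_measurable borel"
  shows "(\<lambda>p. h (f1 p) (f2 p) (f3 p)) \<in> borel_measurable borel"
proof -
  have "(\<lambda>p. (f1 p, f2 p, f3 p)) \<in> borel \<rightarrow>\<^sub>M borel"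
    using assms(2-4) by (simp add: borel_prod[symmetric])
  from measurable_compose[OF this assms(1)[unfolded measurable3_def]] show ?thesis
    by simp
qed

lemma conv3_swap12:
  assumes "measurable3 h"
  shows "conv3 \<xi> (\<lambda>a b c. h b a c) = conv3 \<xi> h"
proof -
  have "(\<lambda>p. h (fst p) (snd p) (\<xi> - fst p - snd p)) \<in> borel_measurable borel"
    by (rule measurable3_compose[OF assms]; measurable)
  from nn_integral_lborel_swap[OF this] show ?thesis
    by (simp add: conv3_def algebra_simps)
qed

lemma conv3_swap23:
  assumes "measurable3 h"
  shows "conv3 \<xi> (\<lambda>a b c. h a c b) = conv3 \<xi> h"
proof -
  have inner: "(\<integral>\<^sup>+ b. h a (\<xi> - a - b) b \<partial>lborel) = (\<integral>\<^sup>+ b. h a b (\<xi> - a - b) \<partial>lborel)" for a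
  proof -
    have "(\<lambda>b. h a (\<xi> - a - b) b) \<in> borel_measurable borel"
      by (rule measurable3_compose[OF assms]; measurable)
    from nn_integral_lborel_reflect[OF this, of "\<xi> - a"] show ?thesis
      by simp
  qed
  have "(\<lambda>p. h (fst p) (\<xi> - fst p - snd p) (snd p)) \<in> borel_measurable borel"
       "(\<lambda>p. h (fst p) (snd p) (\<xi> - fst p - snd p)) \<in> borel_measurable borel"
    by (rule measurable3_compose[OF assms]; measurable)+
  then show ?thesis
    unfolding conv3_def by (simp add: nn_integral_lborel_fst inner)
qed

lemma measurable3_permute:
  assumes "measurable3 h"
  shows "measurable3 (\<lambda>a b c. h b a c)" "measurable3 (\<lambda>a b c. h c a b)"
  unfolding measurable3_def by (rule measurable3_compose[OF assms]; measurable)+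

lemma conv3_swap13:
  assumes "measurable3 h"
  shows "conv3 \<xi> (\<lambda>a b c. h c b a) = conv3 \<xi> h"
proof -
  have "conv3 \<xi> (\<lambda>a b c. h c b a) = conv3 \<xi> (\<lambda>a b c. h c a b)"
    using conv3_swap12[OF measurable3_permute(2)[OF assms]] by simp
  also have "\<dots> = conv3 \<xi> (\<lambda>a b c. h b a c)"
    using conv3_swap23[OF measurable3_permute(1)[OF assms]] by simp
  also have "\<dots> = conv3 \<xi> h"
    using conv3_swap12[OF assms] .
  finally show ?thesis .
qed

definition max3_part :: "(real \<times> real \<Rightarrow> real \<times> real \<Rightarrow> real \<times> real \<Rightarrow> ennreal) \<Rightarrow> real \<times> real \<Rightarrow> real \<times> real \<Rightarrow> real \<times> real \<Rightarrow> ennreal" where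
  "max3_part h a b c = (if norm a \<le> norm c \<and> norm b \<le> norm c then h a b c else 0)"

lemma measurable3_max3_part:
  assumes "measurable3 h"
  shows "measurable3 (max3_part h)"
proof -
  have [measurable]: "(\<lambda>q. h (fst q) (fst (snd q)) (snd (snd q))) \<in> borel_measurable borel"
    using assms by (simp add: measurable3_def)
  show ?thesis
    unfolding measurable3_def max3_part_def by measurable
qed

lemma conv3_le_max3_part:
  assumes "measurable3 h" and sym: "\<And>a b c. h c b a = h a b c" "\<And>a b c. h a c b = h a b c"
  shows "conv3 \<xi> h \<le> 3 * conv3 \<xi> (max3_part h)"
proof -
  let ?h = "max3_part h"
  have m: "measurable3 ?h"
    using assms(1) by (rule measurable3_max3_part)
  have pointwise: "h a b c \<le> ?h a b c + ?h c b a + ?h a c b" for a b c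
    by (cases "norm a \<le> norm c \<and> norm b \<le> norm c"; cases "norm c \<le> norm a \<and> norm b \<le> norm a")
      (auto simp: max3_part_def sym)
  have [measurable]: "(\<lambda>p. ?h (fst p) (snd p) (\<xi> - fst p - snd p)) \<in> borel_measurable borel"
    "(\<lambda>p. ?h (\<xi> - fst p - snd p) (snd p) (fst p)) \<in> borel_measurable borel"
    "(\<lambda>p. ?h (fst p) (\<xi> - fst p - snd p) (snd p)) \<in> borel_measurable borel"
    by (rule measurable3_compose[OF m]; measurable)+
  have "conv3 \<xi> h \<le> conv3 \<xi> ?h + conv3 \<xi> (\<lambda>a b c. ?h c b a) + conv3 \<xi> (\<lambda>a b c. ?h a c b)"
    unfolding conv3_def by (subst nn_integral_add[symmetric], simp_all)+ (intro nn_integral_mono pointwise)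
  also have "\<dots> = (1 + 1 + 1) * conv3 \<xi> ?h"
    by (simp only: conv3_swap13[OF m] conv3_swap23[OF m] distrib_right mult_1)
  also have "\<dots> = 3 * conv3 \<xi> ?h"
    by simp
  finally show ?thesis .
qed

definition resonant_kernel ::
  "real \<Rightarrow> real \<times> real \<Rightarrow> real \<Rightarrow> real \<Rightarrow> real \<times> real \<Rightarrow> real \<times> real \<Rightarrow> real \<times> real \<Rightarrow> ennreal" where
  "resonant_kernel s \<xi> \<alpha> M a b c = (if \<bar>Phi \<xi> a b c - \<alpha>\<bar> < M then
     ennreal (jb2 \<xi> powr (2 * s) * (msym \<xi>)\<^sup>2 * jb2 a powr (- (2 * s)) * jb2 b powr (- (2 * s)) * jb2 c powr (- (2 * s)))
   else 0)"

lemma measurable3_resonant_kernel: "measurable3 (resonant_kernel s \<xi> \<alpha> M)"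
proof -
  have [measurable]: "(\<lambda>q. Phi \<xi> (fst q) (fst (snd q)) (snd (snd q))) \<in> borel_measurable borel"
    unfolding Phi_def by (intro borel_measurable_continuous_onI continuous_intros)
  show ?thesis
    unfolding measurable3_def resonant_kernel_def by measurable
qed

lemma resonant_kernel_sym:
  "resonant_kernel s \<xi> \<alpha> M c b a = resonant_kernel s \<xi> \<alpha> M a b c"
  "resonant_kernel s \<xi> \<alpha> M a c b = resonant_kernel s \<xi> \<alpha> M a b c"
  by (simp_all add: resonant_kernel_def Phi_def ac_simps)

text \<open>When \<open>\<xi>\<^sub>3\<close> is the largest frequency, \<open>\<langle>\<xi>\<rangle> \<le> 3\<langle>\<xi>\<^sub>3\<rangle>\<close> absorbs the weight \<open>\<langle>\<xi>\<rangle>\<^bsup>2s\<^esup>\<close>.\<close>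
lemma conv3_max3_part_resonant_kernel_le:
  assumes "0 \<le> s"
  shows "conv3 \<xi> (max3_part (resonant_kernel s \<xi> \<alpha> M))
    \<le> ennreal (2 * 3 powr (2 * s) * (jb2 \<xi>)\<^sup>2) * resonance_integral s \<xi> \<alpha> M UNIV"
proof -
  define K where "K = 2 * 3 powr (2 * s) * (jb2 \<xi>)\<^sup>2"
  have pointwise: "max3_part (resonant_kernel s \<xi> \<alpha> M) a b (\<xi> - a - b)
      \<le> ennreal K * (ennreal (jb2 a powr (- (2 * s)) * jb2 b powr (- (2 * s))) * indicator (UNIV \<inter> resonant_set \<xi> \<alpha> M) (a, b))"
    for a b
  proof (cases "norm a \<le> norm (\<xi> - a - b) \<and> norm b \<le> norm (\<xi> - a - b) \<and> \<bar>Phi \<xi> a b (\<xi> - a - b) - \<alpha>\<bar> < M")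
    case True
    let ?c = "\<xi> - a - b"
    have "jb2 \<xi> powr (2 * s) \<le> (3 * jb2 ?c) powr (2 * s)"
      using jb2_add3_le[of a ?c b] True assms jb2_pos[of \<xi>] by (intro powr_mono2) auto
    also have "\<dots> = 3 powr (2 * s) * jb2 ?c powr (2 * s)"
      using jb2_pos[of ?c] by (simp add: powr_mult)
    finally have weight: "jb2 \<xi> powr (2 * s) * jb2 ?c powr (- (2 * s)) \<le> 3 powr (2 * s)"
      using jb2_pos[of ?c] by (simp add: powr_minus divide_inverse[symmetric] pos_divide_le_eq)
    have "jb2 \<xi> powr (2 * s) * (msym \<xi>)\<^sup>2 * jb2 a powr (- (2 * s)) * jb2 b powr (- (2 * s)) * jb2 ?c powr (- (2 * s))
        = (jb2 \<xi> powr (2 * s) * jb2 ?c powr (- (2 * s))) * (msym \<xi>)\<^sup>2 * (jb2 a powr (- (2 * s)) * jb2 b powr (- (2 * s)))"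
      by (simp only: ac_simps)
    also have "\<dots> \<le> 3 powr (2 * s) * (2 * (jb2 \<xi>)\<^sup>2) * (jb2 a powr (- (2 * s)) * jb2 b powr (- (2 * s)))"
      using weight msym_power2_le[of \<xi>] by (intro mult_right_mono mult_mono) auto
    finally have "jb2 \<xi> powr (2 * s) * (msym \<xi>)\<^sup>2 * jb2 a powr (- (2 * s)) * jb2 b powr (- (2 * s)) * jb2 ?c powr (- (2 * s))
        \<le> K * (jb2 a powr (- (2 * s)) * jb2 b powr (- (2 * s)))"
      by (simp add: K_def ac_simps)
    with True show ?thesis
      by (simp add: max3_part_def resonant_kernel_def resonant_set_def K_def ennreal_mult[symmetric] ennreal_leI ac_simps)
  qed (auto simp: max3_part_def resonant_kernel_def)
  have "conv3 \<xi> (max3_part (resonant_kernel s \<xi> \<alpha> M))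
      \<le> (\<integral>\<^sup>+ p. ennreal K * (ennreal (jb2 (fst p) powr (- (2 * s)) * jb2 (snd p) powr (- (2 * s)))
          * indicator (UNIV \<inter> resonant_set \<xi> \<alpha> M) p) \<partial>lborel)"
    unfolding conv3_def by (intro nn_integral_mono) (metis pointwise prod.collapse)
  also have "\<dots> = ennreal K * resonance_integral s \<xi> \<alpha> M UNIV"
    unfolding resonance_integral_def by (rule nn_integral_cmult) measurable
  finally show ?thesis
    by (simp add: K_def)
qed

lemma conv3_resonant_kernel_bound:
  assumes "3/2 < s"
  obtains C where "C < \<infinity>" and "\<And>\<xi> \<alpha> M. conv3 \<xi> (resonant_kernel s \<xi> \<alpha> M) \<le> ennreal (max 1 M) * C"
proof -
  obtain C0 where "C0 < \<infinity>"
    and C0: "\<And>\<xi> \<alpha> M. 1 \<le> M \<Longrightarrow> ennreal ((jb2 \<xi>)\<^sup>2) * resonance_integral s \<xi> \<alpha> M UNIV \<le> ennreal M * C0"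
    using resonance_integral_bound[OF assms] by blast
  let ?C = "3 * ennreal (2 * 3 powr (2 * s)) * C0"
  have "conv3 \<xi> (resonant_kernel s \<xi> \<alpha> M) \<le> ennreal (max 1 M) * ?C" for \<xi> \<alpha> M
  proof -
    have "conv3 \<xi> (resonant_kernel s \<xi> \<alpha> M) \<le> 3 * conv3 \<xi> (max3_part (resonant_kernel s \<xi> \<alpha> M))"
      by (intro conv3_le_max3_part measurable3_resonant_kernel resonant_kernel_sym)
    also have "\<dots> \<le> 3 * (ennreal (2 * 3 powr (2 * s) * (jb2 \<xi>)\<^sup>2) * resonance_integral s \<xi> \<alpha> M UNIV)"
      using assms by (intro mult_left_mono conv3_max3_part_resonant_kernel_le) auto
    also have "\<dots> \<le> 3 * (ennreal (2 * 3 powr (2 * s) * (jb2 \<xi>)\<^sup>2) * resonance_integral s \<xi> \<alpha> (max 1 M) UNIV)"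
      by (intro mult_left_mono resonance_integral_mono) auto
    also have "\<dots> = 3 * (ennreal (2 * 3 powr (2 * s)) * (ennreal ((jb2 \<xi>)\<^sup>2) * resonance_integral s \<xi> \<alpha> (max 1 M) UNIV))"
      by (simp add: ennreal_mult mult.assoc)
    also have "\<dots> \<le> 3 * (ennreal (2 * 3 powr (2 * s)) * (ennreal (max 1 M) * C0))"
      by (intro mult_left_mono C0) auto
    finally show ?thesis
      by (simp add: ac_simps)
  qed
  moreover have "?C < \<infinity>"
    using \<open>C0 < \<infinity>\<close> by (simp add: ennreal_mult_less_top)
  ultimately show ?thesis
    using that by blast
qed

definition Hs_density :: "real \<Rightarrow> (real \<times> real \<Rightarrow> complex) \<Rightarrow> real \<times> real \<Rightarrow> ennreal" where
  "Hs_density s f v = ennreal (jb2 v powr (2 * s) * (cmod (f v))\<^sup>2)"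

lemma Hs_density_borel [measurable]: "f \<in> borel_measurable borel \<Longrightarrow> Hs_density s f \<in> borel_measurable borel"
  unfolding Hs_density_def by measurable

lemma Hs_sq_eq_nn_integral_Hs_density: "Hs_sq s f = (\<integral>\<^sup>+ v. Hs_density s f v \<partial>lborel)"
  by (simp add: Hs_sq_def Hs_density_def)

lemma Hs_sq_eq_Hs_norm: "f \<in> Hs_hat s \<Longrightarrow> Hs_sq s f = ennreal ((Hs_norm s f)\<^sup>2)"
  by (simp add: Hs_hat_def Hs_norm_def less_top)

lemma norm_T_hat_le:
  "ennreal (cmod (T_hat \<alpha> M f1 f2 f3 \<xi>)) \<le> (\<integral>\<^sup>+ p \<in> resonant_set \<xi> \<alpha> M.
     ennreal (\<bar>msym \<xi>\<bar> * cmod (f1 (fst p)) * cmod (f2 (snd p)) * cmod (f3 (\<xi> - fst p - snd p))) \<partial>lborel)"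
proof -
  define h where "h p = (indicator (resonant_set \<xi> \<alpha> M) p :: complex) * complex_of_real (msym \<xi>)
    * f1 (fst p) * f2 (snd p) * f3 (\<xi> - fst p - snd p)" for p
  have T: "T_hat \<alpha> M f1 f2 f3 \<xi> = integral\<^sup>L lborel h"
    unfolding T_hat_def h_def resonant_set_def by simp
  have "ennreal (norm (h p)) = ennreal (\<bar>msym \<xi>\<bar> * cmod (f1 (fst p)) * cmod (f2 (snd p)) * cmod (f3 (\<xi> - fst p - snd p)))
      * indicator (resonant_set \<xi> \<alpha> M) p" for p
    by (simp add: h_def norm_mult indicator_def)
  then show ?thesis
    using integral_norm_bound_ennreal[of lborel h] not_integrable_integral_eq[of lborel h]
    by (cases "integrable lborel h") (simp_all add: T)
qed

definition resonant_kernel_root :: "real \<Rightarrow> real \<times> real \<Rightarrow> real \<Rightarrow> real \<Rightarrow> (real \<times> real) \<times> (real \<times> real) \<Rightarrow> real" where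
  "resonant_kernel_root s \<xi> \<alpha> M p = indicator (resonant_set \<xi> \<alpha> M) p * (jb2 \<xi> powr s * \<bar>msym \<xi>\<bar>
     * jb2 (fst p) powr (- s) * jb2 (snd p) powr (- s) * jb2 (\<xi> - fst p - snd p) powr (- s))"

definition Hs_density_root :: "real \<Rightarrow> (real \<times> real \<Rightarrow> complex) \<Rightarrow> real \<times> real \<Rightarrow> real" where
  "Hs_density_root s f v = jb2 v powr s * cmod (f v)"

lemma power2_resonant_kernel_root:
  "ennreal (resonant_kernel_root s \<xi> \<alpha> M p) ^ 2 = resonant_kernel s \<xi> \<alpha> M (fst p) (snd p) (\<xi> - fst p - snd p)"
proof -
  have "(resonant_kernel_root s \<xi> \<alpha> M p)\<^sup>2 = indicator (resonant_set \<xi> \<alpha> M) p * (jb2 \<xi> powr (2 * s) * (msym \<xi>)\<^sup>2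
      * jb2 (fst p) powr (- (2 * s)) * jb2 (snd p) powr (- (2 * s)) * jb2 (\<xi> - fst p - snd p) powr (- (2 * s)))"
    by (simp add: resonant_kernel_root_def power_mult_distrib jb2_powr_power2 indicator_def)
  then show ?thesis
    by (simp add: resonant_kernel_root_def ennreal_power resonant_kernel_def resonant_set_def indicator_def)
qed

lemma power2_Hs_density_root: "ennreal (Hs_density_root s f v) ^ 2 = Hs_density s f v"
  by (simp add: Hs_density_root_def Hs_density_def ennreal_power power_mult_distrib jb2_powr_power2)

lemma resonant_integrand_factorization:
  "ennreal (jb2 \<xi> powr s) * (ennreal (\<bar>msym \<xi>\<bar> * cmod (f1 (fst p)) * cmod (f2 (snd p)) * cmod (f3 (\<xi> - fst p - snd p)))
      * indicator (resonant_set \<xi> \<alpha> M) p)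
    = ennreal (resonant_kernel_root s \<xi> \<alpha> M p)
      * ennreal (Hs_density_root s f1 (fst p) * Hs_density_root s f2 (snd p) * Hs_density_root s f3 (\<xi> - fst p - snd p))"
proof -
  have cancel: "jb2 w powr (- s) * jb2 w powr s = 1" for w
    using jb2_pos[of w] by (simp add: powr_add[symmetric])
  have "resonant_kernel_root s \<xi> \<alpha> M p
      * (Hs_density_root s f1 (fst p) * Hs_density_root s f2 (snd p) * Hs_density_root s f3 (\<xi> - fst p - snd p))
    = indicator (resonant_set \<xi> \<alpha> M) p * jb2 \<xi> powr s * \<bar>msym \<xi>\<bar>
      * (jb2 (fst p) powr (- s) * jb2 (fst p) powr s) * (jb2 (snd p) powr (- s) * jb2 (snd p) powr s)
      * (jb2 (\<xi> - fst p - snd p) powr (- s) * jb2 (\<xi> - fst p - snd p) powr s)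
      * (cmod (f1 (fst p)) * cmod (f2 (snd p)) * cmod (f3 (\<xi> - fst p - snd p)))"
    unfolding resonant_kernel_root_def Hs_density_root_def by (simp only: ac_simps)
  then show ?thesis
    unfolding cancel
    by (simp add: resonant_kernel_root_def Hs_density_root_def ennreal_mult[symmetric] indicator_def ac_simps)
qed

lemma T_hat_weighted_le:
  assumes [measurable]: "f1 \<in> borel_measurable borel" "f2 \<in> borel_measurable borel" "f3 \<in> borel_measurable borel"
  shows "ennreal (jb2 \<xi> powr (2 * s) * (cmod (T_hat \<alpha> M f1 f2 f3 \<xi>))\<^sup>2)
    \<le> conv3 \<xi> (resonant_kernel s \<xi> \<alpha> M) * conv3 \<xi> (\<lambda>a b c. Hs_density s f1 a * Hs_density s f2 b * Hs_density s f3 c)"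
proof -
  define u where "u = resonant_kernel_root s \<xi> \<alpha> M"
  define v where "v p = Hs_density_root s f1 (fst p) * Hs_density_root s f2 (snd p) * Hs_density_root s f3 (\<xi> - fst p - snd p)" for p
  have [measurable]: "u \<in> borel_measurable borel" "v \<in> borel_measurable borel"
    unfolding u_def v_def resonant_kernel_root_def Hs_density_root_def by measurable
  have v2: "ennreal (v p) ^ 2 = Hs_density s f1 (fst p) * Hs_density s f2 (snd p) * Hs_density s f3 (\<xi> - fst p - snd p)" for p
    by (simp add: v_def Hs_density_root_def ennreal_mult power_mult_distrib power2_Hs_density_root[symmetric])
  have "ennreal (jb2 \<xi> powr (2 * s) * (cmod (T_hat \<alpha> M f1 f2 f3 \<xi>))\<^sup>2)
      = (ennreal (jb2 \<xi> powr s) * ennreal (cmod (T_hat \<alpha> M f1 f2 f3 \<xi>)))\<^sup>2"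
    by (simp add: ennreal_power ennreal_mult[symmetric] power_mult_distrib jb2_powr_power2)
  also have "\<dots> \<le> (ennreal (jb2 \<xi> powr s) * (\<integral>\<^sup>+ p \<in> resonant_set \<xi> \<alpha> M. ennreal (\<bar>msym \<xi>\<bar>
      * cmod (f1 (fst p)) * cmod (f2 (snd p)) * cmod (f3 (\<xi> - fst p - snd p))) \<partial>lborel))\<^sup>2"
    by (intro power_mono mult_left_mono norm_T_hat_le) auto
  also have "\<dots> = (\<integral>\<^sup>+ p. ennreal (u p) * ennreal (v p) \<partial>lborel)\<^sup>2"
    by (subst nn_integral_cmult[symmetric]) (simp_all add: u_def v_def resonant_integrand_factorization)
  also have "\<dots> \<le> (\<integral>\<^sup>+ p. ennreal (u p) ^ 2 \<partial>lborel) * (\<integral>\<^sup>+ p. ennreal (v p) ^ 2 \<partial>lborel)"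
    by (rule Cauchy_Schwarz_nn_integral) measurable
  also have "\<dots> = conv3 \<xi> (resonant_kernel s \<xi> \<alpha> M)
      * conv3 \<xi> (\<lambda>a b c. Hs_density s f1 a * Hs_density s f2 b * Hs_density s f3 c)"
    unfolding conv3_def u_def power2_resonant_kernel_root v2 ..
  finally show ?thesis .
qed

lemma nn_integral_conv3_tensor:
  fixes g1 g2 g3 :: "real \<times> real \<Rightarrow> ennreal"
  assumes [measurable]: "g1 \<in> borel_measurable borel" "g2 \<in> borel_measurable borel" "g3 \<in> borel_measurable borel"
  shows "(\<integral>\<^sup>+ \<xi>. conv3 \<xi> (\<lambda>a b c. g1 a * g2 b * g3 c) \<partial>lborel)
    = (\<integral>\<^sup>+ v. g1 v \<partial>lborel) * (\<integral>\<^sup>+ v. g2 v \<partial>lborel) * (\<integral>\<^sup>+ v. g3 v \<partial>lborel)"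
proof -
  define F where "F z = g1 (fst (snd z)) * g2 (snd (snd z)) * g3 (fst z - fst (snd z) - snd (snd z))"
    for z :: "(real \<times> real) \<times> (real \<times> real) \<times> (real \<times> real)"
  have [measurable]: "F \<in> borel_measurable borel"
    unfolding F_def by measurable
  have "(\<integral>\<^sup>+ \<xi>. conv3 \<xi> (\<lambda>a b c. g1 a * g2 b * g3 c) \<partial>lborel) = (\<integral>\<^sup>+ p. \<integral>\<^sup>+ \<xi>. F (\<xi>, p) \<partial>lborel \<partial>lborel)"
    unfolding conv3_def using nn_integral_lborel_fst[of F] nn_integral_lborel_snd[of F] by (simp add: F_def)
  also have "\<dots> = (\<integral>\<^sup>+ p. g1 (fst p) * g2 (snd p) * (\<integral>\<^sup>+ v. g3 v \<partial>lborel) \<partial>lborel)"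
  proof (rule nn_integral_cong)
    fix p :: "(real \<times> real) \<times> (real \<times> real)"
    have "(\<integral>\<^sup>+ \<xi>. F (\<xi>, p) \<partial>lborel) = g1 (fst p) * g2 (snd p) * (\<integral>\<^sup>+ \<xi>. g3 (\<xi> - (fst p + snd p)) \<partial>lborel)"
      unfolding F_def by (subst nn_integral_cmult[symmetric]) (simp_all add: diff_diff_eq)
    then show "(\<integral>\<^sup>+ \<xi>. F (\<xi>, p) \<partial>lborel) = g1 (fst p) * g2 (snd p) * (\<integral>\<^sup>+ v. g3 v \<partial>lborel)"
      by (simp add: nn_integral_lborel_translate)
  qed
  also have "\<dots> = (\<integral>\<^sup>+ v. g1 v \<partial>lborel) * (\<integral>\<^sup>+ v. g2 v \<partial>lborel) * (\<integral>\<^sup>+ v. g3 v \<partial>lborel)"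
    by (simp add: nn_integral_multc nn_integral_lborel_tensor)
  finally show ?thesis .
qed

lemma borel_measurable_conv3:
  assumes "measurable3 h"
  shows "(\<lambda>\<xi>. conv3 \<xi> h) \<in> borel_measurable lborel"
proof -
  have "(\<lambda>z. h (fst (snd z)) (snd (snd z)) (fst z - fst (snd z) - snd (snd z)))
      \<in> borel_measurable (lborel \<Otimes>\<^sub>M lborel :: ((real \<times> real) \<times> (real \<times> real) \<times> (real \<times> real)) measure)"
    unfolding lborel_prod measurable_lborel2 by (rule measurable3_compose[OF assms]; measurable)
  from lborel.borel_measurable_nn_integral_fst[OF this] show ?thesis
    by (simp add: conv3_def)
qed

theorem Hs_sq_T_hat_le:
  assumes "3/2 < s"
  obtains C :: real where "0 < C"
    and "\<And>\<alpha> M f1 f2 f3. f1 \<in> borel_measurable borel \<Longrightarrow> f2 \<in> borel_measurable borel \<Longrightarrow> f3 \<in> borel_measurable borel \<Longrightarrow>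
      Hs_sq s (T_hat \<alpha> M f1 f2 f3) \<le> ennreal (C\<^sup>2 * max 1 M) * (Hs_sq s f1 * Hs_sq s f2 * Hs_sq s f3)"
proof -
  obtain C0 where "C0 < \<infinity>" and kernel: "\<And>\<xi> \<alpha> M. conv3 \<xi> (resonant_kernel s \<xi> \<alpha> M) \<le> ennreal (max 1 M) * C0"
    using conv3_resonant_kernel_bound[OF assms] by blast
  define C where "C = sqrt (enn2real C0) + 1"
  have C0: "C0 \<le> ennreal (C\<^sup>2)"
    using \<open>C0 < \<infinity>\<close> real_sqrt_pow2[of "enn2real C0"] power_mono[of "sqrt (enn2real C0)" C 2]
    by (cases C0) (auto simp: C_def)
  have kernel': "conv3 \<xi> (resonant_kernel s \<xi> \<alpha> M) \<le> ennreal (C\<^sup>2 * max 1 M)" for \<xi> \<alpha> M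
  proof -
    have "conv3 \<xi> (resonant_kernel s \<xi> \<alpha> M) \<le> ennreal (max 1 M) * ennreal (C\<^sup>2)"
      using order_trans[OF kernel mult_left_mono[OF C0, of "ennreal (max 1 M)"]] by simp
    then show ?thesis
      by (simp add: ennreal_mult mult.commute)
  qed
  have "Hs_sq s (T_hat \<alpha> M f1 f2 f3) \<le> ennreal (C\<^sup>2 * max 1 M) * (Hs_sq s f1 * Hs_sq s f2 * Hs_sq s f3)"
    if [measurable]: "f1 \<in> borel_measurable borel" "f2 \<in> borel_measurable borel" "f3 \<in> borel_measurable borel"
    for \<alpha> M f1 f2 f3
  proof -
    let ?Q = "\<lambda>\<xi>. conv3 \<xi> (\<lambda>a b c. Hs_density s f1 a * Hs_density s f2 b * Hs_density s f3 c)"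
    have "measurable3 (\<lambda>a b c. Hs_density s f1 a * Hs_density s f2 b * Hs_density s f3 c)"
      unfolding measurable3_def by measurable
    note [measurable] = borel_measurable_conv3[OF this]
    have "Hs_sq s (T_hat \<alpha> M f1 f2 f3) \<le> (\<integral>\<^sup>+ \<xi>. conv3 \<xi> (resonant_kernel s \<xi> \<alpha> M) * ?Q \<xi> \<partial>lborel)"
      unfolding Hs_sq_def by (intro nn_integral_mono T_hat_weighted_le) measurable
    also have "\<dots> \<le> (\<integral>\<^sup>+ \<xi>. ennreal (C\<^sup>2 * max 1 M) * ?Q \<xi> \<partial>lborel)"
      by (intro nn_integral_mono mult_right_mono kernel') simp
    also have "\<dots> = ennreal (C\<^sup>2 * max 1 M) * (Hs_sq s f1 * Hs_sq s f2 * Hs_sq s f3)"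
      by (simp add: nn_integral_cmult nn_integral_conv3_tensor Hs_sq_eq_nn_integral_Hs_density)
    finally show ?thesis .
  qed
  moreover have "0 < C"
    by (simp add: C_def add_nonneg_pos)
  ultimately show ?thesis
    using that by blast
qed

theorem lemma10:
  fixes s :: real
  assumes "s > 3/2"
  shows "\<forall>\<delta>>0. \<exists>C>0. \<forall>\<alpha> M f1 f2 f3.
           f1 \<in> Hs_hat s \<and> f2 \<in> Hs_hat s \<and> f3 \<in> Hs_hat s \<longrightarrow>
           Hs_sq s (T_hat \<alpha> M f1 f2 f3)
             \<le> ennreal ((C * jb \<alpha> powr \<delta> * jb M powr (1/2 + \<delta>)
                         * Hs_norm s f1 * Hs_norm s f2 * Hs_norm s f3)\<^sup>2)"
proof (intro allI impI)
  fix \<delta> :: real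
  assume "0 < \<delta>"
  obtain C where "0 < C" and T: "\<And>\<alpha> M f1 f2 f3. f1 \<in> borel_measurable borel \<Longrightarrow> f2 \<in> borel_measurable borel \<Longrightarrow>
      f3 \<in> borel_measurable borel \<Longrightarrow> Hs_sq s (T_hat \<alpha> M f1 f2 f3) \<le> ennreal (C\<^sup>2 * max 1 M) * (Hs_sq s f1 * Hs_sq s f2 * Hs_sq s f3)"
    using Hs_sq_T_hat_le[OF assms] by blast
  show "\<exists>C>0. \<forall>\<alpha> M f1 f2 f3. f1 \<in> Hs_hat s \<and> f2 \<in> Hs_hat s \<and> f3 \<in> Hs_hat s \<longrightarrow>
      Hs_sq s (T_hat \<alpha> M f1 f2 f3) \<le> ennreal ((C * jb \<alpha> powr \<delta> * jb M powr (1/2 + \<delta>)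
        * Hs_norm s f1 * Hs_norm s f2 * Hs_norm s f3)\<^sup>2)"
  proof (intro exI[of _ C] conjI allI impI \<open>0 < C\<close>)
    fix \<alpha> M f1 f2 f3
    assume f: "f1 \<in> Hs_hat s \<and> f2 \<in> Hs_hat s \<and> f3 \<in> Hs_hat s"
    let ?P = "(Hs_norm s f1 * Hs_norm s f2 * Hs_norm s f3)\<^sup>2"
    have "Hs_sq s (T_hat \<alpha> M f1 f2 f3) \<le> ennreal (C\<^sup>2 * max 1 M) * (Hs_sq s f1 * Hs_sq s f2 * Hs_sq s f3)"
      using f by (intro T) (auto simp: Hs_hat_def)
    also have "\<dots> = ennreal (C\<^sup>2 * max 1 M * ?P)"
      using f by (simp add: Hs_sq_eq_Hs_norm ennreal_mult[symmetric] power_mult_distrib)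
    also have "\<dots> \<le> ennreal (C\<^sup>2 * (jb \<alpha> powr \<delta> * jb M powr (1/2 + \<delta>))\<^sup>2 * ?P)"
      using max_1_le_jb_powr[of \<delta> M \<alpha>] \<open>0 < \<delta>\<close> by (intro ennreal_leI mult_right_mono mult_left_mono) auto
    finally show "Hs_sq s (T_hat \<alpha> M f1 f2 f3) \<le> ennreal ((C * jb \<alpha> powr \<delta> * jb M powr (1/2 + \<delta>)
        * Hs_norm s f1 * Hs_norm s f2 * Hs_norm s f3)\<^sup>2)"
      by (simp add: power_mult_distrib ac_simps)
  qed
qed

end
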